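(* Let $c\in\mathbb{R}$, $\beta\geq0$, $q\in(0,1)$, $Q=q^2$, and let $J:\mathbb{Z}\to\mathbb{R}$ satisfy $$\sum_{i=-\infty}^0 \left(1+q^{2(i-c)}\frac{e^{\beta J(i-1)}}{e^{\beta |J(i)|}+q^2 e^{\beta |J(i-2)|}}\right)^{-1} + \sum_{i=1}^\infty \left(1+q^{-2(i-c)}\frac{e^{\beta J(i-1)}}{e^{\beta |J(i)|}+q^{-2} e^{\beta |J(i-2)|}}\right)^{-1}<\infty.$$ Then for every $n\in\mathbb{Z}$, $$Z^{J}_{\beta,q,c}\,\mu_{J}^c\Big(\mathbb{1}_{\{N=0\}}e^{-\beta H^{(n)}_{J}}\Big) = e^{-\beta J(n)} + \sum_{L,R>0}\sum_{\substack{\ell_1,\dots,\ell_L\geq 1 \\ m_1,\dots,m_{R}\geq 1}}\mathbb{1}_{\{\sum_{j=1}^R m_j= \sum_{j=1}^L\ell_j\}}\prod_{j=1}^L Q^{\frac12 \ell_j(\ell_j-1)}\prod_{j=1}^{R}Q^{\frac12 m_j(m_j-1)}\Big(e^{\beta J(n)}A^{(n)}_RB^{(n)}_L + \big(e^{-\beta J(n)}-e^{\beta J(n)}\big)a^{(n)}_Rb^{(n)}_L\Big),$$ where, for the given $\ell_1,\dots,\ell_L,m_1,\dots,m_R$, $$A^{(n)}_R = \sum_{\substack{s_1,\dots,s_{R}\geq 1 \\ s_{i+1}-s_i \geq m_i+1}}\prod_{j=1}^RQ^{s_jm_j}(e^{-\beta})^{J(s_j+n-1)+J(s_j+m_j+n-1)},\qquad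 B^{(n)}_L = \sum_{\substack{r_1,\dots,r_L\leq 0 \\ r_{i+1}-r_i \leq -\ell_i -1}}\prod_{j=1}^{L}Q^{-r_j \ell_j}(e^{-\beta})^{J(r_j+n)+J(r_j-\ell_j+n)},$$ and $a^{(n)}_R$, $b^{(n)}_L$ are defined by the same sums with the extra factors $\mathbb{1}_{\{s_1>1\}}$, respectively $\mathbb{1}_{\{r_1<0\}}$, inserted into the summands.
   Context: Spin configurations are $\sigma\in\{-1,+1\}^{\mathbb{Z}}$; $\mathcal{B}$ is the set of configurations for which there exist $a,b\in\mathbb{Z}$ with $\sigma_{a-i}=-1$ and $\sigma_{b+i}=+1$ for all $i\in\mathbb{N}$. $H_J(\sigma)=\sum_{i\in\mathbb{Z}}J(i)\mathbb{1}_{\{\sigma_i\neq\sigma_{i+1}\}}$, $f_c(\sigma)=2\sum_{i=1}^\infty(i-c)\mathbb{1}_{\{\sigma_i=-1\}}-2\sum_{i=-\infty}^0(i-c)\mathbb{1}_{\{\sigma_i=1\}}$, $Z^J_{\beta,q,c}=\sum_\sigma e^{-\beta H_J(\sigma)}q^{f_c(\sigma)}$ and $\mu^c_J(\sigma)=e^{-\beta H_J(\sigma)}q^{f_c(\sigma)}/Z^J_{\beta,q,c}$ (concentrated on $\mathcal{B}$ under the summability condition). For $\sigma\in\mathcal{B}$, $N(\sigma)=\#\{i\geq1:\sigma_i=-1\}-\#\{i\leq 0:\sigma_i=+1\}$. $H^{(n)}_J(\sigma)=\sum_{i\in\mathbb{Z}}(J(i+n)-J(i))\mathbb{1}_{\{\sigma_i\neq\sigma_{i+1}\}}$,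 and $\mu^c_J(F)$ denotes the expectation of $F$ under $\mu^c_J$. In the sums, $L,R$ range over positive integers and the $\ell_j,m_j$ over positive integers; $s_i$, $r_i$ are integers subject to the displayed constraints (for $i=1,\dots,R-1$, resp. $i=1,\dots,L-1$). *)

theory Defs
  imports "HOL-Analysis.Analysis"
begin

type_synonym spin_config = "int \<Rightarrow> int"

definition configB :: "spin_config set" where
  "configB = {\<sigma>. (\<forall>i. \<sigma> i = -1 \<or> \<sigma> i = 1) \<and>
     (\<exists>a b. (\<forall>i::nat. \<sigma> (a - int i) = -1) \<and> (\<forall>i::nat. \<sigma> (b + int i) = 1))}"

definition H_J :: "(int \<Rightarrow> real) \<Rightarrow> spin_config \<Rightarrow> real" where
  "H_J J \<sigma> = (\<Sum>i\<in>{i. \<sigma> i \<noteq> \<sigma> (i+1)}. J i)"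

definition f_c :: "real \<Rightarrow> spin_config \<Rightarrow> real" where
  "f_c c \<sigma> = 2 * (\<Sum>i\<in>{i. i \<ge> 1 \<and> \<sigma> i = -1}. (real_of_int i - c))
             - 2 * (\<Sum>i\<in>{i. i \<le> 0 \<and> \<sigma> i = 1}. (real_of_int i - c))"

definition weight :: "(int \<Rightarrow> real) \<Rightarrow> real \<Rightarrow> real \<Rightarrow> real \<Rightarrow> spin_config \<Rightarrow> real" where
  "weight J \<beta> q c \<sigma> = exp (- \<beta> * H_J J \<sigma>) * q powr (f_c c \<sigma>)"

definition Zpart :: "(int \<Rightarrow> real) \<Rightarrow> real \<Rightarrow> real \<Rightarrow> real \<Rightarrow> real" where
  "Zpart J \<beta> q c = (\<Sum>\<^sub>\<infinity>\<sigma>\<in>configB. weight J \<beta> q c \<sigma>)"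

definition mu_exp :: "(int \<Rightarrow> real) \<Rightarrow> real \<Rightarrow> real \<Rightarrow> real \<Rightarrow> (spin_config \<Rightarrow> real) \<Rightarrow> real" where
  "mu_exp J \<beta> q c F = (\<Sum>\<^sub>\<infinity>\<sigma>\<in>configB. weight J \<beta> q c \<sigma> * F \<sigma>) / Zpart J \<beta> q c"

definition Nfun :: "spin_config \<Rightarrow> int" where
  "Nfun \<sigma> = int (card {i. i \<ge> 1 \<and> \<sigma> i = -1}) - int (card {i. i \<le> 0 \<and> \<sigma> i = 1})"

definition H_n :: "(int \<Rightarrow> real) \<Rightarrow> int \<Rightarrow> spin_config \<Rightarrow> real" where
  "H_n J n \<sigma> = (\<Sum>i\<in>{i. \<sigma> i \<noteq> \<sigma> (i+1)}. J (i+n) - J i)"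

text \<open>Admissible position lists s_1..s_R (0-based lists here).\<close>
definition adm_s :: "nat list \<Rightarrow> int list set" where
  "adm_s ms = {ss. length ss = length ms \<and> (\<forall>j<length ss. ss!j \<ge> 1) \<and>
      (\<forall>i. i + 1 < length ss \<longrightarrow> ss!(i+1) - ss!i \<ge> int (ms!i) + 1)}"

definition adm_r :: "nat list \<Rightarrow> int list set" where
  "adm_r ls = {rs. length rs = length ls \<and> (\<forall>j<length rs. rs!j \<le> 0) \<and>
      (\<forall>i. i + 1 < length rs \<longrightarrow> rs!(i+1) - rs!i \<le> - int (ls!i) - 1)}"

definition A_R :: "(int \<Rightarrow> real) \<Rightarrow> real \<Rightarrow> real \<Rightarrow> int \<Rightarrow> nat list \<Rightarrow> real" where
  "A_R J \<beta> Q n ms = (\<Sum>\<^sub>\<infinity>ss\<in>adm_s ms. \<Prod>j<length ms.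
      Q powr (real_of_int (ss!j) * real (ms!j)) *
      exp (- \<beta>) powr (J (ss!j + n - 1) + J (ss!j + int (ms!j) + n - 1)))"

definition a_R :: "(int \<Rightarrow> real) \<Rightarrow> real \<Rightarrow> real \<Rightarrow> int \<Rightarrow> nat list \<Rightarrow> real" where
  "a_R J \<beta> Q n ms = (\<Sum>\<^sub>\<infinity>ss\<in>adm_s ms. (if ss!0 > 1 then 1 else 0) * (\<Prod>j<length ms.
      Q powr (real_of_int (ss!j) * real (ms!j)) *
      exp (- \<beta>) powr (J (ss!j + n - 1) + J (ss!j + int (ms!j) + n - 1))))"

definition B_L :: "(int \<Rightarrow> real) \<Rightarrow> real \<Rightarrow> real \<Rightarrow> int \<Rightarrow> nat list \<Rightarrow> real" where
  "B_L J \<beta> Q n ls = (\<Sum>\<^sub>\<infinity>rs\<in>adm_r ls. \<Prod>j<length ls.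
      Q powr (- real_of_int (rs!j) * real (ls!j)) *
      exp (- \<beta>) powr (J (rs!j + n) + J (rs!j - int (ls!j) + n)))"

definition b_L :: "(int \<Rightarrow> real) \<Rightarrow> real \<Rightarrow> real \<Rightarrow> int \<Rightarrow> nat list \<Rightarrow> real" where
  "b_L J \<beta> Q n ls = (\<Sum>\<^sub>\<infinity>rs\<in>adm_r ls. (if rs!0 < 0 then 1 else 0) * (\<Prod>j<length ls.
      Q powr (- real_of_int (rs!j) * real (ls!j)) *
      exp (- \<beta>) powr (J (rs!j + n) + J (rs!j - int (ls!j) + n))))"

end

(*
  A configuration in B is determined by the finite set D of sites where it differs from the
  ground state (-1 on the nonpositive, +1 on the positive integers), and its weight times
  exp (-beta H^(n)) is its weight with the couplings at the interfaces shifted by n.  The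
  condition N = 0 says that D has as many positive as nonpositive sites.  Cutting both halves of
  such a D into maximal runs of consecutive sites is a bijection onto the index set of the
  right-hand side (lengths m_j, l_j, end points s_j, r_j); the weight factorises over the runs:
  q^(f_c) gives the factors Q^(l(l-1)/2) and Q^(s m), Q^(-r l), and each run contributes the
  couplings at its two ends.  The two halves interact only through the bond (0,1): it carries
  exp (-beta J(n)) when no run touches it (r_1 < 0 and s_1 > 1) and exp (beta J(n)) otherwise,
  which produces the correction terms a_R b_L.  All rearrangements are justified by absolute
  summability: the weight is at most a constant times a product over the defects of terms that
  the hypothesis makes summable.
*)
theory Submission
  imports Defs
begin

definition ground_spin :: "int \<Rightarrow> int" where
  "ground_spin i = (if i \<le> 0 then -1 else 1)"

definition config_of :: "int set \<Rightarrow> spin_config" where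
  "config_of D = (\<lambda>i. if i \<in> D then - ground_spin i else ground_spin i)"

definition defects :: "spin_config \<Rightarrow> int set" where
  "defects \<sigma> = {i. \<sigma> i \<noteq> ground_spin i}"

definition interfaces :: "spin_config \<Rightarrow> int set" where
  "interfaces \<sigma> = {i. \<sigma> i \<noteq> \<sigma> (i + 1)}"

lemma finite_defects:
  assumes "\<sigma> \<in> configB"
  shows "finite (defects \<sigma>)"
proof -
  from assms obtain a b where a: "\<forall>i::nat. \<sigma> (a - int i) = -1" and b: "\<forall>i::nat. \<sigma> (b + int i) = 1"
    unfolding configB_def by blast
  have "defects \<sigma> \<subseteq> {min a 0 .. max b 1}"
  proof
    fix i assume i: "i \<in> defects \<sigma>"
    have "\<sigma> i = -1" if "i < a" using a[rule_format, of "nat (a - i)"] that by simp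
    moreover have "\<sigma> i = 1" if "i > b" using b[rule_format, of "nat (i - b)"] that by simp
    ultimately show "i \<in> {min a 0 .. max b 1}"
      using i by (auto simp: defects_def ground_spin_def split: if_splits)
        (metis min.coboundedI1 not_less, metis max.coboundedI1 not_less)
  qed
  then show ?thesis
    using finite_subset by blast
qed

lemma config_of_defects:
  assumes "\<sigma> \<in> configB"
  shows "config_of (defects \<sigma>) = \<sigma>"
proof
  fix i
  have "\<sigma> i = -1 \<or> \<sigma> i = 1"
    using assms unfolding configB_def by blast
  then show "config_of (defects \<sigma>) i = \<sigma> i"
    by (auto simp: config_of_def defects_def ground_spin_def)
qed

lemma defects_config_of: "defects (config_of D) = D"
  by (auto simp: config_of_def defects_def ground_spin_def)

lemma inj_config_of: "inj config_of"
  by (metis defects_config_of injI)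

lemma config_of_in_configB:
  assumes "finite D"
  shows "config_of D \<in> configB"
proof -
  define a where "a = Min (insert 0 D) - 1"
  define b where "b = Max (insert 0 D) + 1"
  have bounds: "a < d \<and> d < b" if "d \<in> insert 0 D" for d
  proof -
    have "Min (insert 0 D) \<le> d" "d \<le> Max (insert 0 D)"
      using assms that by (intro Min.coboundedI Max.coboundedI; simp)+
    then show ?thesis by (simp add: a_def b_def)
  qed
  have "config_of D (a - int i) = -1" for i :: nat
  proof -
    have "a - int i \<notin> D" "a - int i \<le> 0"
      using bounds[of "a - int i"] bounds[of 0] by auto
    then show ?thesis by (simp add: config_of_def ground_spin_def)
  qed
  moreover have "config_of D (b + int i) = 1" for i :: nat
  proof -
    have "b + int i \<notin> D" "b + int i > 0"
      using bounds[of "b + int i"] bounds[of 0] by auto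
    then show ?thesis by (simp add: config_of_def ground_spin_def)
  qed
  moreover have "config_of D i = -1 \<or> config_of D i = 1" for i
    by (simp add: config_of_def ground_spin_def)
  ultimately show ?thesis
    unfolding configB_def by blast
qed

lemma configB_eq_image_config_of: "configB = config_of ` {D. finite D}"
proof
  show "configB \<subseteq> config_of ` {D. finite D}"
    using finite_defects config_of_defects by (metis CollectI image_eqI subsetI)
qed (use config_of_in_configB in auto)

lemma interfaces_config_of_subset:
  "interfaces (config_of D) \<subseteq> insert 0 (D \<union> (\<lambda>d. d - 1) ` D)"
proof
  fix i assume "i \<in> interfaces (config_of D)"
  then have "i = 0 \<or> i \<in> D \<or> i + 1 \<in> D"
    by (auto simp: interfaces_def config_of_def ground_spin_def split: if_splits)
  then show "i \<in> insert 0 (D \<union> (\<lambda>d. d - 1) ` D)"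
    by (auto intro: rev_image_eqI[of "i + 1"])
qed

lemma finite_interfaces_config_of: "finite D \<Longrightarrow> finite (interfaces (config_of D))"
  by (rule finite_subset[OF interfaces_config_of_subset]) auto

lemma positive_defects_config_of: "{i. i \<ge> 1 \<and> config_of D i = -1} = D \<inter> {1..}"
  by (auto simp: config_of_def ground_spin_def)

lemma nonpositive_defects_config_of: "{i. i \<le> 0 \<and> config_of D i = 1} = D \<inter> {..0}"
  by (auto simp: config_of_def ground_spin_def)

lemma f_c_config_of:
  "f_c c (config_of D) = 2 * (\<Sum>i\<in>D \<inter> {1..}. real_of_int i - c) - 2 * (\<Sum>i\<in>D \<inter> {..0}. real_of_int i - c)"
  unfolding f_c_def positive_defects_config_of nonpositive_defects_config_of ..

lemma Nfun_config_of: "Nfun (config_of D) = int (card (D \<inter> {1..})) - int (card (D \<inter> {..0}))"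
  unfolding Nfun_def positive_defects_config_of nonpositive_defects_config_of ..

definition flip_weight :: "real \<Rightarrow> real \<Rightarrow> int \<Rightarrow> real" where
  "flip_weight q c d =
     (if d \<ge> 1 then q powr (2 * (real_of_int d - c)) else q powr (- 2 * (real_of_int d - c)))"

lemma flip_weight_pos: "q > 0 \<Longrightarrow> flip_weight q c d > 0"
  by (simp add: flip_weight_def)

lemma powr_f_c_config_of:
  assumes "finite D" "q > 0"
  shows "q powr f_c c (config_of D) = (\<Prod>d\<in>D. flip_weight q c d)"
proof -
  let ?P = "D \<inter> {1..}" and ?M = "D \<inter> {..0}"
  have "f_c c (config_of D) = (\<Sum>i\<in>?P. 2 * (real_of_int i - c)) + (\<Sum>i\<in>?M. - 2 * (real_of_int i - c))"
    unfolding f_c_config_of by (simp only: mult_minus_left sum_negf flip: sum_distrib_left)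
  then have "q powr f_c c (config_of D)
      = (\<Prod>i\<in>?P. q powr (2 * (real_of_int i - c))) * (\<Prod>i\<in>?M. q powr (- 2 * (real_of_int i - c)))"
    using assms by (simp add: powr_add powr_sum)
  also have "\<dots> = (\<Prod>i\<in>?P. flip_weight q c i) * (\<Prod>i\<in>?M. flip_weight q c i)"
    by (intro arg_cong2[where f = "(*)"] prod.cong) (auto simp: flip_weight_def)
  also have "\<dots> = (\<Prod>d\<in>D. flip_weight q c d)"
    using assms(1) by (subst prod.union_disjoint[symmetric]) (auto intro: prod.cong)
  finally show ?thesis .
qed

definition shifted_weight :: "(int \<Rightarrow> real) \<Rightarrow> real \<Rightarrow> real \<Rightarrow> real \<Rightarrow> int \<Rightarrow> int set \<Rightarrow> real" where
  "shifted_weight J \<beta> q c n D =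
     exp (- \<beta> * (\<Sum>i\<in>interfaces (config_of D). J (i + n))) * q powr f_c c (config_of D)"

lemma shifted_weight_nonneg: "shifted_weight J \<beta> q c n D \<ge> 0"
  by (simp add: shifted_weight_def)

lemma weight_config_of: "weight J \<beta> q c (config_of D) = shifted_weight J \<beta> q c 0 D"
  by (simp add: weight_def shifted_weight_def H_J_def interfaces_def)

lemma weight_mult_exp_H_n:
  "weight J \<beta> q c (config_of D) * exp (- \<beta> * H_n J n (config_of D)) = shifted_weight J \<beta> q c n D"
proof -
  have "H_J J (config_of D) + H_n J n (config_of D) = (\<Sum>i\<in>interfaces (config_of D). J (i + n))"
    by (simp add: H_J_def H_n_def interfaces_def flip: sum.distrib)
  then have "exp (- \<beta> * H_J J (config_of D)) * exp (- \<beta> * H_n J n (config_of D))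
      = exp (- \<beta> * (\<Sum>i\<in>interfaces (config_of D). J (i + n)))"
    by (metis distrib_left exp_add)
  then show ?thesis
    by (simp add: weight_def shifted_weight_def mult_ac)
qed

lemma sum_union_le:
  fixes f :: "'a \<Rightarrow> 'b::ordered_comm_monoid_add"
  assumes "finite A" "finite B" "\<And>x. x \<in> B \<Longrightarrow> 0 \<le> f x"
  shows "sum f (A \<union> B) \<le> sum f A + sum f B"
proof -
  have "sum f (A \<union> B) = sum f A + sum f (B - A)"
    using assms by (subst sum.union_disjoint[symmetric]) (auto intro: sum.cong)
  also have "sum f (B - A) \<le> sum f B"
    using assms by (intro sum_mono2) auto
  finally show ?thesis
    by (simp add: add_left_mono)
qed

definition neg_part :: "real \<Rightarrow> real" where
  "neg_part x = max 0 (- x)"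

lemma neg_part_nonneg: "neg_part x \<ge> 0"
  by (simp add: neg_part_def)

lemma neg_interface_energy_le:
  assumes "finite D"
  shows "- (\<Sum>i\<in>interfaces (config_of D). J (i + n))
     \<le> neg_part (J n) + (\<Sum>d\<in>D. neg_part (J (d - 1 + n)) + neg_part (J (d + n)))"
proof -
  let ?g = "\<lambda>i. neg_part (J (i + n))"
  have fin: "finite ((\<lambda>d. d - 1) ` D)"
    using assms by simp
  have "- (\<Sum>i\<in>interfaces (config_of D). J (i + n)) \<le> (\<Sum>i\<in>interfaces (config_of D). ?g i)"
    by (simp add: neg_part_def sum_mono flip: sum_negf)
  also have "\<dots> \<le> sum ?g (insert 0 (D \<union> (\<lambda>d. d - 1) ` D))"
    using assms interfaces_config_of_subset by (intro sum_mono2) (auto simp: neg_part_nonneg)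
  also have "\<dots> \<le> ?g 0 + (sum ?g D + sum ?g ((\<lambda>d. d - 1) ` D))"
    using assms fin sum_union_le[of D "(\<lambda>d. d - 1) ` D" ?g]
    by (simp add: sum.insert_if neg_part_nonneg add_increasing)
  also have "sum ?g ((\<lambda>d. d - 1) ` D) \<le> (\<Sum>d\<in>D. ?g (d - 1))"
    using sum_image_le[OF assms, of ?g "\<lambda>d. d - 1"] by (simp add: neg_part_nonneg o_def)
  finally show ?thesis
    by (simp add: sum.distrib add_ac)
qed

lemma exp_interface_energy_le:
  assumes "finite D" "\<beta> \<ge> 0"
  shows "exp (- \<beta> * (\<Sum>i\<in>interfaces (config_of D). J (i + n)))
     \<le> exp (\<beta> * neg_part (J n)) * (\<Prod>d\<in>D. exp (\<beta> * (neg_part (J (d - 1 + n)) + neg_part (J (d + n)))))"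
proof -
  have "- \<beta> * (\<Sum>i\<in>interfaces (config_of D). J (i + n))
      \<le> \<beta> * (neg_part (J n) + (\<Sum>d\<in>D. neg_part (J (d - 1 + n)) + neg_part (J (d + n))))"
    using mult_left_mono[OF neg_interface_energy_le[OF assms(1)] assms(2)] by simp
  moreover have "exp (\<beta> * (neg_part (J n) + (\<Sum>d\<in>D. neg_part (J (d - 1 + n)) + neg_part (J (d + n)))))
      = exp (\<beta> * neg_part (J n)) * (\<Prod>d\<in>D. exp (\<beta> * (neg_part (J (d - 1 + n)) + neg_part (J (d + n)))))"
    by (simp add: distrib_left sum_distrib_left exp_add exp_sum[OF assms(1)])
  ultimately show ?thesis
    by (metis exp_le_cancel_iff)
qed

lemma summable_on_prod_finite_subsets:
  fixes a :: "'a \<Rightarrow> real"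
  assumes nonneg: "\<And>x. a x \<ge> 0" and summable: "a summable_on UNIV"
  shows "(\<lambda>D. \<Prod>d\<in>D. a d) summable_on {D. finite D}"
proof (rule nonneg_bdd_above_summable_on)
  show "0 \<le> (\<Prod>d\<in>D. a d)" for D
    using nonneg by (simp add: prod_nonneg)
  show "bdd_above (sum (\<lambda>D. \<Prod>d\<in>D. a d) ` {F. F \<subseteq> {D. finite D} \<and> finite F})"
  proof (rule bdd_aboveI2)
    fix F :: "'a set set"
    assume F: "F \<in> {F. F \<subseteq> {D. finite D} \<and> finite F}"
    define U where "U = \<Union>F"
    have finU: "finite U"
      using F by (auto simp: U_def)
    have "(\<Sum>D\<in>F. \<Prod>d\<in>D. a d) \<le> (\<Sum>D\<in>Pow U. \<Prod>d\<in>D. a d)"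
      using finU F nonneg by (intro sum_mono2) (auto simp: U_def prod_nonneg)
    also have "\<dots> = (\<Sum>D\<in>Pow U. (\<Prod>d\<in>D. a d) * (\<Prod>d\<in>U - D. 1))"
      by simp
    also have "\<dots> = (\<Prod>d\<in>U. a d + 1)"
      by (rule prod_add[symmetric, OF finU])
    also have "\<dots> \<le> (\<Prod>d\<in>U. exp (a d))"
      using nonneg by (intro prod_mono) (auto simp: add.commute)
    also have "\<dots> = exp (\<Sum>d\<in>U. a d)"
      by (simp add: exp_sum[OF finU])
    also have "\<dots> \<le> exp (infsum a UNIV)"
      using summable finU nonneg by (subst exp_le_cancel_iff, intro finite_sum_le_infsum) auto
    finally show "(\<Sum>D\<in>F. \<Prod>d\<in>D. a d) \<le> exp (infsum a UNIV)" .
  qed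
qed

lemma summable_on_comparison_cofinite:
  fixes f g :: "'a \<Rightarrow> real"
  assumes "g summable_on A" "finite F"
    and "\<And>x. x \<in> A \<Longrightarrow> 0 \<le> f x" "\<And>x. x \<in> A - F \<Longrightarrow> f x \<le> g x"
  shows "f summable_on A"
proof -
  have "f summable_on (A - F)"
    using assms by (intro summable_on_comparison_test[OF summable_on_subset_banach[OF assms(1)]]) auto
  moreover have "f summable_on (A \<inter> F)"
    using assms(2) by simp
  ultimately have "f summable_on ((A - F) \<union> (A \<inter> F))"
    by (rule summable_on_union)
  then show ?thesis
    by (simp add: Un_Diff_Int)
qed

lemma finite_summable_on_gt:
  fixes f :: "'a \<Rightarrow> real"
  assumes "f summable_on A" "\<And>x. x \<in> A \<Longrightarrow> f x \<ge> 0" "e > 0"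
  shows "finite {x\<in>A. f x > e}"
proof (rule ccontr)
  assume "infinite {x\<in>A. f x > e}"
  moreover obtain N :: nat where N: "real N * e > infsum f A"
    using reals_Archimedean3[OF assms(3)] by blast
  ultimately obtain B where B: "finite B" "card B = N" "B \<subseteq> {x\<in>A. f x > e}"
    using infinite_arbitrarily_large by blast
  have "real N * e = (\<Sum>x\<in>B. e)"
    using B by simp
  also have "\<dots> \<le> sum f B"
    using B by (intro sum_mono) auto
  also have "\<dots> \<le> infsum f A"
    using B assms by (intro finite_sum_le_infsum) auto
  finally show False
    using N by simp
qed

lemma summable_on_geometric_int:
  fixes r :: real
  assumes "0 \<le> r" "r < 1"
  shows "(\<lambda>k::int. r ^ nat \<bar>k\<bar>) summable_on UNIV"
proof -
  have geom: "(\<lambda>n::nat. r ^ n) summable_on UNIV"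
    using assms by (subst summable_on_UNIV_nonneg_real_iff) (auto intro: summable_geometric)
  have pos: "(\<lambda>k::int. r ^ nat \<bar>k\<bar>) summable_on range int"
    by (subst summable_on_reindex) (auto simp: o_def geom)
  moreover have "(\<lambda>k::int. r ^ nat \<bar>k\<bar>) summable_on uminus ` range int"
    using pos by (subst summable_on_reindex) (auto simp: o_def)
  ultimately have "(\<lambda>k::int. r ^ nat \<bar>k\<bar>) summable_on (range int \<union> uminus ` range int)"
    by (rule summable_on_union)
  moreover have "k \<in> range int \<union> uminus ` range int" for k :: int
  proof (cases "k \<ge> 0")
    case True
    then have "k = int (nat k)" by simp
    then show ?thesis by blast
  next
    case False
    then have "k = - int (nat (- k))" by simp
    then show ?thesis by blast
  qed
  then have "range int \<union> uminus ` range int = (UNIV :: int set)"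
    by blast
  ultimately show ?thesis
    by simp
qed

lemma flip_weight_eq:
  assumes "q > 0"
  shows "flip_weight q c k = (if k \<ge> 1 then q powr (- 2 * c) else q powr (2 * c)) * (q^2) ^ nat \<bar>k\<bar>"
proof -
  have "(q^2) ^ nat \<bar>k\<bar> = q powr (2 * \<bar>real_of_int k\<bar>)"
    using assms powr_realpow[of q "2 * nat \<bar>k\<bar>"] by (simp add: power_mult)
  then show ?thesis
    using assms by (simp add: flip_weight_def flip: powr_add)
qed

lemma summable_flip_weight:
  assumes "0 < q" "q < 1"
  shows "flip_weight q c summable_on UNIV"
proof (rule summable_on_comparison_test)
  show "(\<lambda>k::int. (q powr (- 2 * c) + q powr (2 * c)) * (q^2) ^ nat \<bar>k\<bar>) summable_on UNIV"
    using assms by (intro summable_on_cmult_right summable_on_geometric_int) (simp_all add: power_less_one_iff)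
  show "flip_weight q c k \<le> (q powr (- 2 * c) + q powr (2 * c)) * (q^2) ^ nat \<bar>k\<bar>" for k
    by (simp add: flip_weight_eq[OF assms(1)] mult_right_mono)
  show "0 \<le> flip_weight q c k" for k
    using flip_weight_pos[OF assms(1)] by (rule less_imp_le)
qed

definition flip_ratio :: "real \<Rightarrow> real \<Rightarrow> real \<Rightarrow> (int \<Rightarrow> real) \<Rightarrow> int \<Rightarrow> real" where
  "flip_ratio q c \<beta> J i = exp (\<beta> * J (i - 1)) /
     (flip_weight q c i * (exp (\<beta> * \<bar>J i\<bar>) + (if i \<le> 0 then q^2 else q powr -2) * exp (\<beta> * \<bar>J (i - 2)\<bar>)))"

lemma flip_ratio_pos: "q > 0 \<Longrightarrow> flip_ratio q c \<beta> J i > 0"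
  by (simp add: flip_ratio_def flip_weight_pos add_pos_nonneg)

lemma inverse_flip_ratio:
  "1 / flip_ratio q c \<beta> J i = flip_weight q c i *
     (exp (\<beta> * \<bar>J i\<bar>) + (if i \<le> 0 then q^2 else q powr -2) * exp (\<beta> * \<bar>J (i - 2)\<bar>)) / exp (\<beta> * J (i - 1))"
  by (simp add: flip_ratio_def)

lemma summable_inverse_one_plus_flip_ratio:
  assumes "q > 0"
    and "(\<lambda>i::int. 1 / (1 + q powr (2 * (real_of_int i - c)) * exp (\<beta> * J (i - 1))
            / (exp (\<beta> * \<bar>J i\<bar>) + q^2 * exp (\<beta> * \<bar>J (i - 2)\<bar>)))) summable_on {..0}"
    and "(\<lambda>i::int. 1 / (1 + q powr (- 2 * (real_of_int i - c)) * exp (\<beta> * J (i - 1))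
            / (exp (\<beta> * \<bar>J i\<bar>) + q powr (-2) * exp (\<beta> * \<bar>J (i - 2)\<bar>)))) summable_on {1..}"
  shows "(\<lambda>i. 1 / (1 + flip_ratio q c \<beta> J i)) summable_on UNIV"
proof -
  have inv: "q powr (- x) = 1 / q powr x" for x
    by (simp add: powr_minus_divide)
  have "(\<lambda>i. 1 / (1 + flip_ratio q c \<beta> J i)) summable_on {..0}"
    using assms(2) by (rule summable_on_cong[THEN iffD1, rotated])
      (simp add: flip_ratio_def flip_weight_def inv[of "2 * (real_of_int _ - c)", simplified])
  moreover have "(\<lambda>i. 1 / (1 + flip_ratio q c \<beta> J i)) summable_on {1..}"
    using assms(3) by (rule summable_on_cong[THEN iffD1, rotated])
      (simp add: flip_ratio_def flip_weight_def inv[of "- 2 * (real_of_int _ - c)", simplified])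
  ultimately have "(\<lambda>i. 1 / (1 + flip_ratio q c \<beta> J i)) summable_on ({..0} \<union> {1..})"
    by (rule summable_on_union)
  moreover have "{..0} \<union> {1..} = (UNIV :: int set)"
    by auto
  ultimately show ?thesis
    by simp
qed

lemma flip_weight_succ:
  assumes "q > 0" "k \<noteq> 0"
  shows "flip_weight q c (k + 1) * (if k + 1 \<le> 0 then q^2 else q powr -2) = flip_weight q c k"
proof (cases "k \<ge> 1")
  case True
  then show ?thesis
    by (simp add: flip_weight_def flip: powr_add)
next
  case False
  then have "k + 1 \<le> 0"
    using assms(2) by linarith
  then show ?thesis
    using False assms(1) by (simp add: flip_weight_def flip: powr_add powr_numeral)
qed

lemma flip_weight_exp_le_inverse_flip_ratio:
  assumes "q > 0"
  shows "flip_weight q c k * exp (\<beta> * \<bar>J k\<bar>) / exp (\<beta> * J (k - 1)) \<le> 1 / flip_ratio q c \<beta> J k"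
  unfolding inverse_flip_ratio using assms
  by (intro divide_right_mono mult_left_mono) (auto simp: flip_weight_pos less_imp_le)

lemma flip_weight_le_inverse_flip_ratio_succ:
  assumes "q > 0" "\<beta> \<ge> 0" "k \<noteq> 0"
  shows "flip_weight q c k / exp (\<beta> * J k) \<le> 1 / flip_ratio q c \<beta> J (k + 1)"
proof -
  let ?\<rho> = "if k + 1 \<le> 0 then q^2 else q powr -2"
  have "flip_weight q c k = flip_weight q c (k + 1) * (?\<rho> * 1)"
    using flip_weight_succ[OF assms(1,3)] by simp
  also have "\<dots> \<le> flip_weight q c (k + 1) * (exp (\<beta> * \<bar>J (k + 1)\<bar>) + ?\<rho> * exp (\<beta> * \<bar>J (k - 1)\<bar>))"
    using assms by (intro mult_left_mono add_increasing) (auto simp: flip_weight_pos less_imp_le)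
  finally show ?thesis
    unfolding inverse_flip_ratio by (simp add: divide_right_mono)
qed

lemma weighted_flip_weight_le:
  assumes "q > 0" "\<beta> \<ge> 0" "k \<noteq> 0"
  shows "exp (\<beta> * (neg_part (J (k - 1)) + neg_part (J k))) * flip_weight q c k
     \<le> 1 / flip_ratio q c \<beta> J k + 1 / flip_ratio q c \<beta> J (k + 1) + flip_weight q c k"
proof -
  have inv_nonneg: "0 \<le> 1 / flip_ratio q c \<beta> J i" for i
    using flip_ratio_pos[OF assms(1)] by (simp add: less_imp_le)
  consider "J (k - 1) \<le> 0" | "J (k - 1) > 0" "J k \<ge> 0" | "J (k - 1) > 0" "J k < 0"
    by linarith
  then show ?thesis
  proof cases
    case 1
    have "exp (\<beta> * neg_part (J k)) \<le> exp (\<beta> * \<bar>J k\<bar>)"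
      using assms(2) by (auto simp: neg_part_def intro!: mult_left_mono)
    have "exp (\<beta> * (neg_part (J (k - 1)) + neg_part (J k))) * flip_weight q c k
        = flip_weight q c k * exp (\<beta> * neg_part (J k)) / exp (\<beta> * J (k - 1))"
      using 1 by (simp add: neg_part_def max_def algebra_simps exp_diff)
    also have "\<dots> \<le> flip_weight q c k * exp (\<beta> * \<bar>J k\<bar>) / exp (\<beta> * J (k - 1))"
      using \<open>exp (\<beta> * neg_part (J k)) \<le> exp (\<beta> * \<bar>J k\<bar>)\<close> flip_weight_pos[OF assms(1)]
      by (intro divide_right_mono mult_left_mono) (auto simp: less_imp_le)
    also have "\<dots> \<le> 1 / flip_ratio q c \<beta> J k"
      by (rule flip_weight_exp_le_inverse_flip_ratio[OF assms(1)])
    finally show ?thesis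
      using inv_nonneg[of "k + 1"] flip_weight_pos[OF assms(1), of c k] by linarith
  next
    case 2
    then show ?thesis
      using inv_nonneg[of k] inv_nonneg[of "k + 1"] by (simp add: neg_part_def)
  next
    case 3
    then have "exp (\<beta> * (neg_part (J (k - 1)) + neg_part (J k))) * flip_weight q c k
        = flip_weight q c k / exp (\<beta> * J k)"
      by (simp add: neg_part_def exp_minus field_simps)
    also have "\<dots> \<le> 1 / flip_ratio q c \<beta> J (k + 1)"
      by (rule flip_weight_le_inverse_flip_ratio_succ[OF assms])
    finally show ?thesis
      using inv_nonneg[of k] flip_weight_pos[OF assms(1), of c k] by linarith
  qed
qed

lemma summable_weighted_flip_weight:
  assumes "0 < q" "q < 1" "\<beta> \<ge> 0"
    and summable: "(\<lambda>i. 1 / (1 + flip_ratio q c \<beta> J i)) summable_on UNIV"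
  shows "(\<lambda>k. exp (\<beta> * (neg_part (J (k - 1)) + neg_part (J k))) * flip_weight q c k) summable_on UNIV"
proof -
  define t where "t i = 1 / (1 + flip_ratio q c \<beta> J i)" for i
  have t_nonneg: "t i \<ge> 0" for i
    using flip_ratio_pos[OF assms(1)] by (simp add: t_def add_pos_pos less_imp_le)
  have t_summable: "t summable_on UNIV"
    using summable by (simp add: t_def[abs_def])
  have "bij_betw (\<lambda>k::int. k + 1) UNIV UNIV"
    by (rule bij_betwI[where g = "\<lambda>k. k - 1"]) auto
  then have t_succ: "(\<lambda>k. t (k + 1)) summable_on UNIV"
    using summable_on_reindex_bij_betw[of "\<lambda>k. k + 1" UNIV UNIV t] t_summable by simp
  define Big where "Big = {i \<in> UNIV. t i > 1/2}"
  have "finite Big"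
    unfolding Big_def using t_summable t_nonneg by (intro finite_summable_on_gt) auto
  then have fin: "finite (insert 0 (Big \<union> (\<lambda>k. k - 1) ` Big))"
    by simp
  have inverse_le: "1 / flip_ratio q c \<beta> J i \<le> 2 * t i" if "i \<notin> Big" for i
  proof -
    have "flip_ratio q c \<beta> J i \<ge> 1"
      using that flip_ratio_pos[OF assms(1), of c \<beta> J i] by (simp add: Big_def t_def field_simps)
    then show ?thesis
      by (simp add: t_def field_simps)
  qed
  show ?thesis
  proof (rule summable_on_comparison_cofinite[OF _ fin])
    show "(\<lambda>k. 2 * t k + 2 * t (k + 1) + flip_weight q c k) summable_on UNIV"
      by (intro summable_on_add summable_on_cmult_right t_summable t_succ summable_flip_weight assms(1,2))
    show "0 \<le> exp (\<beta> * (neg_part (J (k - 1)) + neg_part (J k))) * flip_weight q c k" for k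
      using flip_weight_pos[OF assms(1)] by (simp add: less_imp_le)
    fix k :: int
    assume k: "k \<in> UNIV - insert 0 (Big \<union> (\<lambda>k. k - 1) ` Big)"
    then have "k \<notin> Big" "k + 1 \<notin> Big" "k \<noteq> 0"
      by (auto simp: image_iff)
    then show "exp (\<beta> * (neg_part (J (k - 1)) + neg_part (J k))) * flip_weight q c k
        \<le> 2 * t k + 2 * t (k + 1) + flip_weight q c k"
      using weighted_flip_weight_le[OF assms(1,3)] inverse_le by (smt (verit))
  qed
qed

lemma flip_weight_le_shift:
  assumes "q > 0" "(d \<ge> 1) = (d + n \<ge> 1)"
  shows "flip_weight q c d \<le> (q powr (- 2 * real_of_int n) + q powr (2 * real_of_int n)) * flip_weight q c (d + n)"
proof -
  have "flip_weight q c d = q powr (if d \<ge> 1 then - 2 * real_of_int n else 2 * real_of_int n) * flip_weight q c (d + n)"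
    using assms by (auto simp: flip_weight_def algebra_simps simp flip: powr_add)
  also have "\<dots> \<le> (q powr (- 2 * real_of_int n) + q powr (2 * real_of_int n)) * flip_weight q c (d + n)"
    using flip_weight_pos[OF assms(1), of c "d + n"] by (intro mult_right_mono) auto
  finally show ?thesis .
qed

lemma summable_shifted_weighted_flip_weight:
  assumes "0 < q" "q < 1" "\<beta> \<ge> 0"
    and "(\<lambda>i. 1 / (1 + flip_ratio q c \<beta> J i)) summable_on UNIV"
  shows "(\<lambda>d. exp (\<beta> * (neg_part (J (d - 1 + n)) + neg_part (J (d + n)))) * flip_weight q c d) summable_on UNIV"
proof -
  define u where "u k = exp (\<beta> * (neg_part (J (k - 1)) + neg_part (J k))) * flip_weight q c k" for k
  have "bij_betw (\<lambda>k::int. k + n) UNIV UNIV"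
    by (rule bij_betwI[where g = "\<lambda>k. k - n"]) auto
  then have u_shift: "(\<lambda>d. u (d + n)) summable_on UNIV"
    using summable_on_reindex_bij_betw[of "\<lambda>k. k + n" UNIV UNIV u]
      summable_weighted_flip_weight[OF assms] by (simp add: u_def[abs_def])
  define K where "K = q powr (- 2 * real_of_int n) + q powr (2 * real_of_int n)"
  have "{d. (d \<ge> 1) \<noteq> (d + n \<ge> 1)} \<subseteq> {- \<bar>n\<bar> - 1 .. \<bar>n\<bar> + 1}"
    by auto
  then have fin: "finite {d. (d \<ge> 1) \<noteq> (d + n \<ge> 1)}"
    by (rule finite_subset) simp
  show ?thesis
  proof (rule summable_on_comparison_cofinite[OF _ fin])
    show "(\<lambda>d. K * u (d + n)) summable_on UNIV"
      by (rule summable_on_cmult_right[OF u_shift])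
    show "0 \<le> exp (\<beta> * (neg_part (J (d - 1 + n)) + neg_part (J (d + n)))) * flip_weight q c d" for d
      using flip_weight_pos[OF assms(1)] by (simp add: less_imp_le)
    fix d :: int
    assume "d \<in> UNIV - {d. (d \<ge> 1) \<noteq> (d + n \<ge> 1)}"
    then have "flip_weight q c d \<le> K * flip_weight q c (d + n)"
      unfolding K_def using flip_weight_le_shift[OF assms(1)] by simp
    then show "exp (\<beta> * (neg_part (J (d - 1 + n)) + neg_part (J (d + n)))) * flip_weight q c d \<le> K * u (d + n)"
      by (simp add: u_def algebra_simps mult_left_mono)
  qed
qed

lemma summable_shifted_weight:
  assumes "0 < q" "q < 1" "\<beta> \<ge> 0"
    and "(\<lambda>i. 1 / (1 + flip_ratio q c \<beta> J i)) summable_on UNIV"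
  shows "shifted_weight J \<beta> q c n summable_on {D. finite D}"
proof -
  define a where "a d = exp (\<beta> * (neg_part (J (d - 1 + n)) + neg_part (J (d + n)))) * flip_weight q c d" for d
  have "a d \<ge> 0" for d
    using flip_weight_pos[OF assms(1), of c d] by (simp add: a_def)
  moreover have "a summable_on UNIV"
    unfolding a_def by (rule summable_shifted_weighted_flip_weight[OF assms])
  ultimately have prod_summable: "(\<lambda>D. \<Prod>d\<in>D. a d) summable_on {D. finite D}"
    by (rule summable_on_prod_finite_subsets)
  show ?thesis
  proof (rule summable_on_comparison_test)
    show "(\<lambda>D. exp (\<beta> * neg_part (J n)) * (\<Prod>d\<in>D. a d)) summable_on {D. finite D}"
      by (rule summable_on_cmult_right[OF prod_summable])
    show "0 \<le> shifted_weight J \<beta> q c n D" for D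
      by (rule shifted_weight_nonneg)
    fix D :: "int set"
    assume "D \<in> {D. finite D}"
    then have fin: "finite D"
      by simp
    have "shifted_weight J \<beta> q c n D
        \<le> exp (\<beta> * neg_part (J n)) * (\<Prod>d\<in>D. exp (\<beta> * (neg_part (J (d - 1 + n)) + neg_part (J (d + n)))))
          * (\<Prod>d\<in>D. flip_weight q c d)"
      unfolding shifted_weight_def powr_f_c_config_of[OF fin assms(1)]
      using flip_weight_pos[OF assms(1)]
      by (intro mult_right_mono exp_interface_energy_le fin assms(3)) (simp add: prod_nonneg less_imp_le)
    also have "\<dots> = exp (\<beta> * neg_part (J n)) * (\<Prod>d\<in>D. a d)"
      by (simp add: a_def prod.distrib)
    finally show "shifted_weight J \<beta> q c n D \<le> exp (\<beta> * neg_part (J n)) * (\<Prod>d\<in>D. a d)" .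
  qed
qed

fun runs :: "nat list \<Rightarrow> int list \<Rightarrow> int set" where
  "runs (m # ms) (s # ss) = {s ..< s + int m} \<union> runs ms ss"
| "runs _ _ = {}"

fun spaced :: "int \<Rightarrow> nat list \<Rightarrow> int list \<Rightarrow> bool" where
  "spaced k [] [] = True"
| "spaced k (m # ms) (s # ss) = (k \<le> s \<and> spaced (s + int m + 1) ms ss)"
| "spaced k _ _ = False"

lemma spaced_length: "spaced k ms ss \<Longrightarrow> length ss = length ms"
  by (induction k ms ss rule: spaced.induct) auto

lemma runs_subset_spaced: "spaced k ms ss \<Longrightarrow> runs ms ss \<subseteq> {k..}"
  by (induction k ms ss rule: spaced.induct) auto

lemma finite_runs: "finite (runs ms ss)"
  by (induction ms ss rule: runs.induct) auto

definition gaps :: "nat list \<Rightarrow> int list \<Rightarrow> bool" where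
  "gaps ms ss \<longleftrightarrow> (\<forall>i. i + 1 < length ss \<longrightarrow> int (ms!i) + 1 \<le> ss!(i + 1) - ss!i)"

lemma gaps_Cons: "gaps (m # ms) (s # ss) \<longleftrightarrow> (ss \<noteq> [] \<longrightarrow> s + int m + 1 \<le> ss!0) \<and> gaps ms ss"
proof
  assume "gaps (m # ms) (s # ss)"
  then show "(ss \<noteq> [] \<longrightarrow> s + int m + 1 \<le> ss!0) \<and> gaps ms ss"
    unfolding gaps_def by (auto simp: neq_Nil_conv dest: spec[of _ 0] spec[of _ "Suc _"])
next
  assume R: "(ss \<noteq> [] \<longrightarrow> s + int m + 1 \<le> ss!0) \<and> gaps ms ss"
  show "gaps (m # ms) (s # ss)"
    unfolding gaps_def
  proof (intro allI impI)
    fix i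
    assume "i + 1 < length (s # ss)"
    then show "int ((m # ms)!i) + 1 \<le> (s # ss)!(i + 1) - (s # ss)!i"
      using R by (cases i) (auto simp: gaps_def)
  qed
qed

lemma spaced_iff: "spaced k ms ss \<longleftrightarrow> length ss = length ms \<and> (\<forall>j<length ss. k \<le> ss!j) \<and> gaps ms ss"
proof (induction k ms ss rule: spaced.induct)
  case (2 k m ms s ss)
  have "(\<forall>j<length ss. s + int m + 1 \<le> ss!j) \<longleftrightarrow> (ss \<noteq> [] \<longrightarrow> s + int m + 1 \<le> ss!0)"
    if "gaps ms ss"
  proof -
    have "sorted ss"
      using that by (fastforce simp: gaps_def sorted_iff_nth_Suc)
    then show ?thesis
      by (auto dest: sorted_nth_mono[of ss 0])
  qed
  moreover have "(\<forall>j<length (s # ss). k \<le> (s # ss)!j) \<longleftrightarrow> k \<le> s \<and> (\<forall>j<length ss. k \<le> ss!j)"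
    by (auto simp: nth_Cons' less_Suc_eq_0_disj)
  ultimately show ?case
    using "2.IH" unfolding gaps_Cons by auto
qed (auto simp: gaps_def)

definition reflect :: "int \<Rightarrow> int" where
  "reflect x = 1 - x"

lemma reflect_reflect [simp]: "reflect (reflect x) = x"
  by (simp add: reflect_def)

lemma image_reflect_reflect [simp]: "reflect ` reflect ` A = A"
  by (simp add: image_image)

lemma inj_reflect: "inj reflect"
  by (metis injI reflect_reflect)

lemma adm_s_eq_spaced: "adm_s ms = {ss. spaced 1 ms ss}"
  unfolding adm_s_def spaced_iff gaps_def by auto

lemma adm_r_eq_spaced: "adm_r ls = {rs. spaced 1 ls (map reflect rs)}"
  unfolding adm_r_def spaced_iff gaps_def by (auto simp: reflect_def algebra_simps)

lemma card_runs: "spaced k ms ss \<Longrightarrow> card (runs ms ss) = sum_list ms"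
proof (induction k ms ss rule: spaced.induct)
  case (2 k m ms s ss)
  then have "{s ..< s + int m} \<inter> runs ms ss = {}"
    using runs_subset_spaced[of "s + int m + 1" ms ss] by auto
  then show ?case
    using 2 by (simp add: card_Un_disjoint finite_runs)
qed auto

lemma sum_runs:
  "spaced k ms ss \<Longrightarrow> (\<Sum>i\<in>runs ms ss. real_of_int i)
     = (\<Sum>j<length ms. real_of_int (ss!j) * real (ms!j) + real (ms!j) * (real (ms!j) - 1) / 2)"
proof (induction k ms ss rule: spaced.induct)
  case (2 k m ms s ss)
  have run: "(\<Sum>i\<in>{s ..< s + int m}. real_of_int i) = real_of_int s * real m + real m * (real m - 1) / 2"
  proof (induction m)
    case (Suc m)
    have "{s ..< s + int (Suc m)} = insert (s + int m) {s ..< s + int m}"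
      by auto
    then show ?case
      using Suc by (simp add: field_simps)
  qed simp
  have "{s ..< s + int m} \<inter> runs ms ss = {}"
    using 2 runs_subset_spaced[of "s + int m + 1" ms ss] by auto
  then show ?case
    using 2 by (simp add: sum.union_disjoint finite_runs run sum.lessThan_Suc_shift del: sum.lessThan_Suc)
qed auto

lemma first_run:
  assumes "spaced k (m # ms) (s # ss)"
  defines "R \<equiv> runs (m # ms) (s # ss)"
  shows "{s ..< s + int m} \<subseteq> R" "\<And>x. x \<in> R \<Longrightarrow> s \<le> x" "s + int m \<notin> R"
    and "runs ms ss = R - {s ..< s + int m}"
  using assms runs_subset_spaced[of "s + int m + 1" ms ss] by auto

lemma runs_inj:
  assumes "\<forall>m\<in>set ms. m \<ge> 1" "\<forall>m\<in>set ms'. m \<ge> 1" "spaced k ms ss" "spaced k' ms' ss'"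
    and "runs ms ss = runs ms' ss'"
  shows "ms = ms' \<and> ss = ss'"
  using assms
proof (induction ms arbitrary: ss ms' ss' k k')
  case Nil
  then have "ss = []" "runs ms' ss' = {}"
    by (cases ss; auto)+
  then show ?case
    using Nil.prems by (cases ms'; cases ss') auto
next
  case (Cons m ms)
  obtain s ss0 where ss: "ss = s # ss0"
    using Cons.prems(3) by (cases ss) auto
  have "s \<in> runs ms' ss'"
    using Cons.prems(1,5) ss by auto
  then obtain m' ms0 s' ss0' where ms': "ms' = m' # ms0" and ss': "ss' = s' # ss0'"
    by (cases ms'; cases ss') auto
  have eq: "runs (m' # ms0) (s' # ss0') = runs (m # ms) (s # ss0)"
    using Cons.prems(5)[unfolded ss ms' ss', symmetric] .
  note R = first_run[OF Cons.prems(3)[unfolded ss]]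
  note R' = first_run[OF Cons.prems(4)[unfolded ms' ss'], unfolded eq]
  have "m \<ge> 1" "m' \<ge> 1"
    using Cons.prems(1,2) ms' by auto
  then have "s \<in> runs (m # ms) (s # ss0)" "s' \<in> runs (m # ms) (s # ss0)"
    by (intro subsetD[OF R(1)] subsetD[OF R'(1)]; simp)+
  then have "s = s'"
    using R(2) R'(2) by (meson order_antisym)
  have "s + int m \<notin> {s' ..< s' + int m'}" "s' + int m' \<notin> {s ..< s + int m}"
    using R(1,3) R'(1,3) by blast+
  then have "m = m'"
    using \<open>s = s'\<close> by simp
  have "runs ms ss0 = runs ms0 ss0'"
    by (simp only: R(4) R'(4) \<open>s = s'\<close> \<open>m = m'\<close>)
  then have "ms = ms0 \<and> ss0 = ss0'"
    using Cons.prems(1-4) ss ms' ss' by (intro Cons.IH) auto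
  then show ?case
    using ss ms' ss' \<open>s = s'\<close> \<open>m = m'\<close> by simp
qed

lemma initial_run:
  assumes "finite S" "s \<in> S"
  obtains m :: nat where "m \<ge> 1" "{s ..< s + int m} \<subseteq> S" "s + int m \<notin> S"
proof -
  have "s \<le> Max S"
    using assms by simp
  then have "s + int (nat (Max S - s + 1)) \<notin> S"
    using assms(1) Max_ge[of S] by fastforce
  then have ex: "\<exists>m::nat. s + int m \<notin> S" ..
  define m where "m = (LEAST m::nat. s + int m \<notin> S)"
  have end_run: "s + int m \<notin> S"
    unfolding m_def by (rule LeastI_ex[OF ex])
  have "{s ..< s + int m} \<subseteq> S"
  proof
    fix x
    assume "x \<in> {s ..< s + int m}"
    then have "x = s + int (nat (x - s))" "nat (x - s) < m"
      by auto
    then show "x \<in> S"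
      unfolding m_def using not_less_Least by metis
  qed
  moreover have "m \<ge> 1"
    using end_run assms(2) by (cases m) auto
  ultimately show ?thesis
    using end_run that by blast
qed

lemma ex_spaced_runs_eq:
  assumes "finite S" "S \<subseteq> {k..}"
  shows "\<exists>ms ss. (\<forall>m\<in>set ms. m \<ge> 1) \<and> spaced k ms ss \<and> runs ms ss = S"
  using assms
proof (induction "card S" arbitrary: S k rule: less_induct)
  case less
  show ?case
  proof (cases "S = {}")
    case True
    then show ?thesis
      by (intro exI[of _ "[]"]) auto
  next
    case False
    define s where "s = Min S"
    have "s \<in> S" and s_le: "\<And>x. x \<in> S \<Longrightarrow> s \<le> x"
      using False less.prems by (auto simp: s_def)
    then obtain m where m: "m \<ge> 1" "{s ..< s + int m} \<subseteq> S" "s + int m \<notin> S"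
      using initial_run less.prems(1) by blast
    define S' where "S' = S - {s ..< s + int m}"
    have "s \<notin> S'"
      using m(1) by (simp add: S'_def)
    then have "S' \<subset> S"
      using \<open>s \<in> S\<close> unfolding S'_def by blast
    then have "card S' < card S"
      using less.prems(1) by (rule psubset_card_mono[rotated])
    moreover have "S' \<subseteq> {s + int m + 1..}"
    proof
      fix x
      assume "x \<in> S'"
      then have "x \<in> S" "x \<notin> {s ..< s + int m}" "x \<noteq> s + int m"
        using m(3) by (auto simp: S'_def)
      then show "x \<in> {s + int m + 1..}"
        using s_le[of x] by auto
    qed
    moreover have "finite S'"
      using less.prems(1) by (simp add: S'_def)
    ultimately obtain ms ss where "\<forall>m\<in>set ms. m \<ge> 1" "spaced (s + int m + 1) ms ss" "runs ms ss = S'"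
      using less.hyps by blast
    moreover have "k \<le> s"
      using \<open>s \<in> S\<close> less.prems(2) by auto
    ultimately show ?thesis
      using m by (intro exI[of _ "m # ms"] exI[of _ "s # ss"]) (auto simp: S'_def)
  qed
qed

definition boundary :: "int set \<Rightarrow> int set" where
  "boundary S = {i. i \<ge> 0 \<and> (i \<in> S) \<noteq> (i + 1 \<in> S)}"

lemma finite_boundary:
  assumes "finite S"
  shows "finite (boundary S)"
proof (rule finite_subset)
  show "boundary S \<subseteq> S \<union> (\<lambda>x. x - 1) ` S"
  proof
    fix i
    assume "i \<in> boundary S"
    then have "i \<in> S \<or> i + 1 \<in> S"
      by (auto simp: boundary_def)
    then show "i \<in> S \<union> (\<lambda>x. x - 1) ` S"
      by (auto intro: image_eqI[of i _ "i + 1"])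
  qed
qed (use assms in simp)

lemma boundary_runs_Cons:
  assumes "spaced (s + int m + 1) ms ss" "m \<ge> 1" "s \<ge> 1"
  shows "boundary ({s ..< s + int m} \<union> runs ms ss) = {s - 1, s + int m - 1} \<union> boundary (runs ms ss)"
    and "{s - 1, s + int m - 1} \<inter> boundary (runs ms ss) = {}"
  using assms runs_subset_spaced[OF assms(1)] by (auto simp: boundary_def subset_iff)

lemma sum_boundary_runs:
  "spaced k ms ss \<Longrightarrow> k \<ge> 1 \<Longrightarrow> \<forall>m\<in>set ms. m \<ge> 1 \<Longrightarrow>
   (\<Sum>i\<in>boundary (runs ms ss). K i) = (\<Sum>j<length ms. K (ss!j - 1) + K (ss!j + int (ms!j) - 1))"
proof (induction k ms ss rule: spaced.induct)
  case (1 k)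
  then show ?case
    by (simp add: boundary_def)
next
  case (2 k m ms s ss)
  then have hyps: "spaced (s + int m + 1) ms ss" "m \<ge> 1" "s \<ge> 1"
    by auto
  have "(\<Sum>i\<in>boundary (runs (m # ms) (s # ss)). K i)
      = (\<Sum>i\<in>{s - 1, s + int m - 1}. K i) + (\<Sum>i\<in>boundary (runs ms ss). K i)"
    unfolding runs.simps boundary_runs_Cons(1)[OF hyps]
    using boundary_runs_Cons(2)[OF hyps] by (intro sum.union_disjoint) (auto simp: finite_boundary finite_runs)
  then show ?case
    using 2 hyps by (simp add: sum.lessThan_Suc_shift del: sum.lessThan_Suc)
qed auto

lemma sum_interfaces_config_of_split:
  fixes K :: "int \<Rightarrow> real"
  assumes "finite S" "S \<subseteq> {1..}" "finite T" "T \<subseteq> {..0}"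
  shows "(\<Sum>i\<in>interfaces (config_of (T \<union> S)). K i)
     = (\<Sum>i\<in>boundary S. K i) + (\<Sum>j\<in>boundary (reflect ` T). K (- j))
       + (if 0 \<notin> T \<and> 1 \<notin> S then K 0 else - K 0)"
proof -
  define I where "I = interfaces (config_of (T \<union> S))"
  define S' where "S' = reflect ` T"
  have spin: "config_of (T \<union> S) i = (if i \<ge> 1 then (if i \<in> S then -1 else 1) else (if i \<in> T then 1 else -1))"
    for i
    using assms(2,4) by (auto simp: config_of_def ground_spin_def)
  have S': "j \<in> S' \<longleftrightarrow> 1 - j \<in> T" for j
    unfolding S'_def reflect_def by (auto intro: image_eqI[of j _ "1 - j"])
  have I_pos: "i \<in> I \<longleftrightarrow> i \<in> boundary S" if "i \<ge> 1" for i
    using that by (simp add: I_def interfaces_def spin boundary_def)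
  have I_neg: "i \<in> I \<longleftrightarrow> - i \<in> boundary S'" if "i \<le> -1" for i
    using that by (auto simp: I_def interfaces_def spin boundary_def S' add.commute)
  have "0 \<notin> S" "1 \<notin> T"
    using assms(2,4) by auto
  then have zero: "0 \<in> I \<longleftrightarrow> (0 \<in> T \<longleftrightarrow> 1 \<in> S)" "0 \<in> boundary S \<longleftrightarrow> 1 \<in> S" "0 \<in> boundary S' \<longleftrightarrow> 0 \<in> T"
    by (auto simp: I_def interfaces_def spin boundary_def S')
  have "I - {0} = (boundary S - {0}) \<union> uminus ` (boundary S' - {0})"
  proof (rule set_eqI)
    fix i :: int
    consider "i \<ge> 1" | "i = 0" | "i \<le> -1"
      by linarith
    moreover have "i \<in> uminus ` X \<longleftrightarrow> - i \<in> X" for X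
      by (auto intro: image_eqI[of i _ "- i"])
    moreover have "boundary X \<subseteq> {0..}" for X
      by (auto simp: boundary_def)
    ultimately show "i \<in> I - {0} \<longleftrightarrow> i \<in> (boundary S - {0}) \<union> uminus ` (boundary S' - {0})"
      by cases (use I_pos I_neg in fastforce)+
  qed
  moreover have "(boundary S - {0}) \<inter> uminus ` (boundary S' - {0}) = {}"
    by (auto simp: boundary_def)
  moreover have fin: "finite I" "finite (boundary S)" "finite (boundary S')"
    using assms by (simp_all add: I_def finite_interfaces_config_of finite_boundary S'_def)
  ultimately have "(\<Sum>i\<in>I - {0}. K i) = (\<Sum>i\<in>boundary S - {0}. K i) + (\<Sum>j\<in>boundary S' - {0}. K (- j))"
    by (simp add: sum.union_disjoint sum.reindex inj_on_def)
  then show ?thesis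
    using fin zero by (auto simp: sum_diff1 I_def S'_def split: if_splits)
qed

definition left_runs :: "nat list \<Rightarrow> int list \<Rightarrow> int set" where
  "left_runs ls rs = reflect ` runs ls (map reflect rs)"

text \<open>The right run of length \<open>ms!j\<close> occupies \<open>{ss!j ..< ss!j + ms!j}\<close> and the left run of
  length \<open>ls!j\<close> occupies \<open>{rs!j - ls!j <.. rs!j}\<close>, as in the paper's \<open>s_j\<close> and \<open>r_j\<close>.\<close>
definition defects_of_runs :: "(nat list \<times> nat list) \<times> (int list \<times> int list) \<Rightarrow> int set" where
  "defects_of_runs = (\<lambda>((ls, ms), (rs, ss)). left_runs ls rs \<union> runs ms ss)"

definition balanced_run_lengths :: "(nat list \<times> nat list) set" where
  "balanced_run_lengths = {(ls, ms). ls \<noteq> [] \<and> ms \<noteq> [] \<and> (\<forall>x\<in>set ls. x \<ge> 1) \<and>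
     (\<forall>x\<in>set ms. x \<ge> 1) \<and> sum_list ms = sum_list ls}"

definition run_data :: "((nat list \<times> nat list) \<times> (int list \<times> int list)) set" where
  "run_data = Sigma balanced_run_lengths (\<lambda>(ls, ms). adm_r ls \<times> adm_s ms)"

definition balanced_defects :: "int set set" where
  "balanced_defects = {D. finite D \<and> D \<noteq> {} \<and> card (D \<inter> {1..}) = card (D \<inter> {..0})}"

lemma mem_run_data:
  "((ls, ms), (rs, ss)) \<in> run_data \<longleftrightarrow> (ls, ms) \<in> balanced_run_lengths \<and>
     spaced 1 ls (map reflect rs) \<and> spaced 1 ms ss"
  by (simp add: run_data_def adm_r_eq_spaced adm_s_eq_spaced)

lemma finite_left_runs: "finite (left_runs ls rs)"
  by (simp add: left_runs_def finite_runs)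

lemma left_runs_subset: "spaced 1 ls (map reflect rs) \<Longrightarrow> left_runs ls rs \<subseteq> {..0}"
  using runs_subset_spaced[of 1 ls "map reflect rs"] by (auto simp: left_runs_def reflect_def)

lemma card_left_runs: "spaced 1 ls (map reflect rs) \<Longrightarrow> card (left_runs ls rs) = sum_list ls"
  unfolding left_runs_def by (simp add: card_image inj_on_subset[OF inj_reflect] card_runs)

lemma defects_of_runs_parts:
  assumes "spaced 1 ls (map reflect rs)" "spaced 1 ms ss"
  shows "(left_runs ls rs \<union> runs ms ss) \<inter> {1..} = runs ms ss"
    and "(left_runs ls rs \<union> runs ms ss) \<inter> {..0} = left_runs ls rs"
  using left_runs_subset[OF assms(1)] runs_subset_spaced[OF assms(2)] by force+

lemma inj_on_defects_of_runs: "inj_on defects_of_runs run_data"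
proof (rule inj_onI)
  fix x y
  assume "x \<in> run_data" "y \<in> run_data" "defects_of_runs x = defects_of_runs y"
  moreover obtain ls ms rs ss ls' ms' rs' ss' where
    "x = ((ls, ms), (rs, ss))" "y = ((ls', ms'), (rs', ss'))"
    by (metis prod.collapse)
  ultimately have x: "(ls, ms) \<in> balanced_run_lengths" "spaced 1 ls (map reflect rs)" "spaced 1 ms ss"
    and y: "(ls', ms') \<in> balanced_run_lengths" "spaced 1 ls' (map reflect rs')" "spaced 1 ms' ss'"
    and eq: "left_runs ls rs \<union> runs ms ss = left_runs ls' rs' \<union> runs ms' ss'"
    and xy: "x = ((ls, ms), (rs, ss))" "y = ((ls', ms'), (rs', ss'))"
    by (auto simp: mem_run_data defects_of_runs_def)
  have "runs ms ss = runs ms' ss'"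
    using defects_of_runs_parts(1)[OF x(2,3)] defects_of_runs_parts(1)[OF y(2,3)] eq by simp
  then have "ms = ms' \<and> ss = ss'"
    using runs_inj x(1,3) y(1,3) by (auto simp: balanced_run_lengths_def)
  have "left_runs ls rs = left_runs ls' rs'"
    using defects_of_runs_parts(2)[OF x(2,3)] defects_of_runs_parts(2)[OF y(2,3)] eq by simp
  then have "runs ls (map reflect rs) = runs ls' (map reflect rs')"
    by (metis image_reflect_reflect left_runs_def)
  then have "ls = ls' \<and> map reflect rs = map reflect rs'"
    using runs_inj x(1,2) y(1,2) by (auto simp: balanced_run_lengths_def)
  then have "ls = ls' \<and> rs = rs'"
    using inj_map_eq_map[OF inj_reflect] by blast
  with \<open>ms = ms' \<and> ss = ss'\<close> show "x = y"
    using xy by simp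
qed

lemma defects_of_runs_balanced:
  assumes "x \<in> run_data"
  shows "defects_of_runs x \<in> balanced_defects"
proof -
  obtain ls ms rs ss where x: "x = ((ls, ms), (rs, ss))"
    by (metis prod.collapse)
  then have lengths: "(ls, ms) \<in> balanced_run_lengths"
    and spaced: "spaced 1 ls (map reflect rs)" "spaced 1 ms ss"
    using assms by (simp_all add: mem_run_data)
  then obtain m ms0 s ss0 where "ms = m # ms0" "ss = s # ss0" "m \<ge> 1"
    by (cases ms; cases ss) (auto simp: balanced_run_lengths_def)
  then have "runs ms ss \<noteq> {}"
    by auto
  moreover have "card (runs ms ss) = card (left_runs ls rs)"
    using lengths card_left_runs[OF spaced(1)] card_runs[OF spaced(2)] by (simp add: balanced_run_lengths_def)
  ultimately show ?thesis
    by (simp add: x defects_of_runs_def balanced_defects_def defects_of_runs_parts[OF spaced]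
        finite_left_runs finite_runs)
qed

lemma balanced_defects_of_runs:
  assumes "D \<in> balanced_defects"
  shows "D \<in> defects_of_runs ` run_data"
proof -
  define S where "S = D \<inter> {1..}"
  define T where "T = D \<inter> {..0}"
  have fin: "finite S" "finite (reflect ` T)" and card_eq: "card S = card T"
    using assms by (auto simp: balanced_defects_def S_def T_def)
  obtain ms ss where ms: "\<forall>m\<in>set ms. m \<ge> 1" "spaced 1 ms ss" "runs ms ss = S"
    using ex_spaced_runs_eq[OF fin(1), of 1] by (auto simp: S_def)
  have "reflect ` T \<subseteq> {1..}"
    by (auto simp: T_def reflect_def)
  then obtain ls ss' where ls: "\<forall>m\<in>set ls. m \<ge> 1" "spaced 1 ls ss'" "runs ls ss' = reflect ` T"
    using ex_spaced_runs_eq[OF fin(2)] by blast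
  define rs where "rs = map reflect ss'"
  have spaced_rs: "spaced 1 ls (map reflect rs)"
    using ls(2) by (simp add: rs_def comp_def)
  have T: "left_runs ls rs = T"
    by (simp add: left_runs_def rs_def comp_def ls(3))
  have D: "D = T \<union> S"
    by (auto simp: S_def T_def)
  then have "S \<noteq> {}" "T \<noteq> {}"
    using card_eq fin(1) assms by (auto simp: balanced_defects_def)
  then have "ms \<noteq> []" "ls \<noteq> []"
    using ms(3) T by (auto simp: left_runs_def)
  moreover have "sum_list ms = sum_list ls"
    using card_runs[OF ms(2)] card_left_runs[OF spaced_rs] ms(3) T card_eq by simp
  ultimately have "((ls, ms), (rs, ss)) \<in> run_data"
    using ms ls spaced_rs by (simp add: mem_run_data balanced_run_lengths_def)
  then show ?thesis
    using D T ms(3) by (force simp: defects_of_runs_def)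
qed

lemma defects_of_runs_image: "defects_of_runs ` run_data = balanced_defects"
  using defects_of_runs_balanced balanced_defects_of_runs by blast

lemma one_in_runs_iff:
  assumes "spaced 1 ms ss" "ms \<noteq> []" "\<forall>m\<in>set ms. m \<ge> 1"
  shows "1 \<in> runs ms ss \<longleftrightarrow> ss!0 = 1" and "ss!0 \<ge> 1"
proof -
  obtain m ms0 s ss0 where ms: "ms = m # ms0" and ss: "ss = s # ss0"
    using assms(1,2) by (cases ms; cases ss) auto
  then have "spaced (s + int m + 1) ms0 ss0" "1 \<le> s" "m \<ge> 1"
    using assms(1,3) by auto
  moreover from this have "1 \<notin> runs ms0 ss0"
    using runs_subset_spaced by fastforce
  ultimately show "1 \<in> runs ms ss \<longleftrightarrow> ss!0 = 1" "ss!0 \<ge> 1"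
    using ms ss by auto
qed

lemma interface_energy_runs:
  fixes J :: "int \<Rightarrow> real"
  assumes "((ls, ms), (rs, ss)) \<in> run_data"
  shows "(\<Sum>i\<in>interfaces (config_of (left_runs ls rs \<union> runs ms ss)). J (i + n))
     = (\<Sum>j<length ls. J (rs!j + n) + J (rs!j - int (ls!j) + n))
       + (\<Sum>j<length ms. J (ss!j + n - 1) + J (ss!j + int (ms!j) + n - 1))
       + (if rs!0 < 0 \<and> ss!0 > 1 then J n else - J n)"
proof -
  have lengths: "ls \<noteq> []" "ms \<noteq> []" "\<forall>x\<in>set ls. x \<ge> 1" "\<forall>x\<in>set ms. x \<ge> 1"
    and spaced: "spaced 1 ls (map reflect rs)" "spaced 1 ms ss"
    using assms by (auto simp: mem_run_data balanced_run_lengths_def)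
  have len_rs: "length rs = length ls"
    using spaced_length[OF spaced(1)] by simp
  have "(\<Sum>i\<in>boundary (runs ms ss). J (i + n))
      = (\<Sum>j<length ms. J (ss!j + n - 1) + J (ss!j + int (ms!j) + n - 1))"
    unfolding sum_boundary_runs[OF spaced(2) order_refl lengths(4)] by (simp add: algebra_simps)
  moreover have "(\<Sum>j\<in>boundary (reflect ` left_runs ls rs). J (- j + n))
      = (\<Sum>j<length ls. J (rs!j + n) + J (rs!j - int (ls!j) + n))"
    unfolding left_runs_def image_reflect_reflect sum_boundary_runs[OF spaced(1) order_refl lengths(3)]
    by (intro sum.cong) (simp_all add: reflect_def len_rs algebra_simps)
  moreover have "1 \<notin> runs ms ss \<longleftrightarrow> ss!0 > 1"
    using one_in_runs_iff[OF spaced(2) lengths(2,4)] by auto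
  moreover have "0 \<notin> left_runs ls rs \<longleftrightarrow> rs!0 < 0"
  proof -
    have "0 \<in> left_runs ls rs \<longleftrightarrow> 1 \<in> runs ls (map reflect rs)"
      unfolding left_runs_def by (force simp: reflect_def)
    moreover have "map reflect rs ! 0 = 1 - rs!0"
      using lengths(1) len_rs by (simp add: reflect_def)
    ultimately show ?thesis
      using one_in_runs_iff[OF spaced(1) lengths(1,3)] by auto
  qed
  ultimately show ?thesis
    using sum_interfaces_config_of_split[OF finite_runs runs_subset_spaced[OF spaced(2)] finite_left_runs
        left_runs_subset[OF spaced(1)], of "\<lambda>i. J (i + n)"]
    by (simp add: Un_commute)
qed

lemma f_c_runs:
  assumes "((ls, ms), (rs, ss)) \<in> run_data"
  shows "f_c c (config_of (left_runs ls rs \<union> runs ms ss))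
     = 2 * ((\<Sum>j<length ls. real (ls!j) * (real (ls!j) - 1) / 2 - real_of_int (rs!j) * real (ls!j))
          + (\<Sum>j<length ms. real (ms!j) * (real (ms!j) - 1) / 2 + real_of_int (ss!j) * real (ms!j)))"
proof -
  have balanced: "sum_list ms = sum_list ls"
    and spaced: "spaced 1 ls (map reflect rs)" "spaced 1 ms ss"
    using assms by (auto simp: mem_run_data balanced_run_lengths_def)
  have len_rs: "length rs = length ls"
    using spaced_length[OF spaced(1)] by simp
  let ?S = "runs ms ss" and ?T = "left_runs ls rs" and ?S' = "runs ls (map reflect rs)"
  have "(\<Sum>i\<in>?T. real_of_int i) = (\<Sum>i\<in>?S'. 1 - real_of_int i)"
    unfolding left_runs_def by (subst sum.reindex) (auto simp: inj_on_subset[OF inj_reflect] reflect_def)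
  also have "\<dots> = real (sum_list ls) - (\<Sum>i\<in>?S'. real_of_int i)"
    using card_runs[OF spaced(1)] by (simp add: sum_subtractf)
  also have "\<dots> = (\<Sum>j<length ls. real_of_int (rs!j) * real (ls!j) - real (ls!j) * (real (ls!j) - 1) / 2)"
    unfolding sum_runs[OF spaced(1)] sum_list_sum_nth
    by (simp add: atLeast0LessThan len_rs reflect_def algebra_simps flip: sum_subtractf sum.distrib)
  finally have sum_T: "(\<Sum>i\<in>?T. real_of_int i) = \<dots>" .
  have "f_c c (config_of (?T \<union> ?S)) = 2 * (\<Sum>i\<in>?S. real_of_int i - c) - 2 * (\<Sum>i\<in>?T. real_of_int i - c)"
    unfolding f_c_config_of defects_of_runs_parts[OF spaced] ..
  also have "\<dots> = 2 * (\<Sum>i\<in>?S. real_of_int i) - 2 * (\<Sum>i\<in>?T. real_of_int i)"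
    using card_runs[OF spaced(2)] card_left_runs[OF spaced(1)] balanced by (simp add: sum_subtractf)
  finally show ?thesis
    unfolding sum_T sum_runs[OF spaced(2)] by (simp add: sum_subtractf sum.distrib)
qed

definition right_runs_weight :: "(int \<Rightarrow> real) \<Rightarrow> real \<Rightarrow> real \<Rightarrow> int \<Rightarrow> nat list \<Rightarrow> int list \<Rightarrow> real" where
  "right_runs_weight J \<beta> Q n ms ss = (\<Prod>j<length ms.
      Q powr (real_of_int (ss!j) * real (ms!j)) *
      exp (- \<beta>) powr (J (ss!j + n - 1) + J (ss!j + int (ms!j) + n - 1)))"

definition left_runs_weight :: "(int \<Rightarrow> real) \<Rightarrow> real \<Rightarrow> real \<Rightarrow> int \<Rightarrow> nat list \<Rightarrow> int list \<Rightarrow> real" where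
  "left_runs_weight J \<beta> Q n ls rs = (\<Prod>j<length ls.
      Q powr (- real_of_int (rs!j) * real (ls!j)) *
      exp (- \<beta>) powr (J (rs!j + n) + J (rs!j - int (ls!j) + n)))"

definition triangular_weight :: "real \<Rightarrow> nat list \<Rightarrow> real" where
  "triangular_weight Q xs = (\<Prod>j<length xs. Q powr (real (xs!j) * (real (xs!j) - 1) / 2))"

lemma right_runs_weight_nonneg: "right_runs_weight J \<beta> Q n ms ss \<ge> 0"
  unfolding right_runs_weight_def by (rule prod_nonneg) simp

lemma left_runs_weight_nonneg: "left_runs_weight J \<beta> Q n ls rs \<ge> 0"
  unfolding left_runs_weight_def by (rule prod_nonneg) simp

lemma triangular_weight_pos: "Q > 0 \<Longrightarrow> triangular_weight Q xs > 0"
  unfolding triangular_weight_def by (rule prod_pos) simp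

lemma prod_square_powr:
  fixes q :: real and a :: "nat \<Rightarrow> real"
  assumes "q > 0"
  shows "(\<Prod>j<N. (q^2) powr a j) = q powr (2 * (\<Sum>j<N. a j))"
proof -
  have "(q^2) powr x = q powr (2 * x)" for x
    using assms by (simp flip: powr_powr)
  then show ?thesis
    using assms by (simp add: powr_sum sum_distrib_left)
qed

lemma prod_square_powr_exp_powr:
  fixes q \<beta> :: real and a b :: "nat \<Rightarrow> real"
  assumes "q > 0"
  shows "(\<Prod>j<N. (q^2) powr a j * exp (- \<beta>) powr b j) = q powr (2 * (\<Sum>j<N. a j)) * exp (- \<beta> * (\<Sum>j<N. b j))"
proof -
  have "exp (- \<beta>) powr y = exp (- \<beta> * y)" for y
    by (simp add: powr_def mult.commute)
  moreover have "exp (- \<beta> * (\<Sum>j<N. b j)) = (\<Prod>j<N. exp (- \<beta> * b j))"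
    unfolding sum_distrib_left by (rule exp_sum) simp
  ultimately show ?thesis
    by (simp add: prod.distrib prod_square_powr[OF assms])
qed

lemma shifted_weight_defects_of_runs:
  assumes "q > 0" "((ls, ms), (rs, ss)) \<in> run_data"
  shows "shifted_weight J \<beta> q c n (left_runs ls rs \<union> runs ms ss)
     = triangular_weight (q^2) ls * triangular_weight (q^2) ms
       * (if rs!0 < 0 \<and> ss!0 > 1 then exp (- \<beta> * J n) else exp (\<beta> * J n))
       * left_runs_weight J \<beta> (q^2) n ls rs * right_runs_weight J \<beta> (q^2) n ms ss"
proof -
  define LL where "LL = (\<Sum>j<length ls. real (ls!j) * (real (ls!j) - 1) / 2)"
  define LM where "LM = (\<Sum>j<length ms. real (ms!j) * (real (ms!j) - 1) / 2)"
  define RB where "RB = (\<Sum>j<length ls. - real_of_int (rs!j) * real (ls!j))"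
  define RA where "RA = (\<Sum>j<length ms. real_of_int (ss!j) * real (ms!j))"
  define EB where "EB = (\<Sum>j<length ls. J (rs!j + n) + J (rs!j - int (ls!j) + n))"
  define EA where "EA = (\<Sum>j<length ms. J (ss!j + n - 1) + J (ss!j + int (ms!j) + n - 1))"
  have "f_c c (config_of (left_runs ls rs \<union> runs ms ss)) = 2 * (LL + LM + RB + RA)"
    unfolding f_c_runs[OF assms(2)] LL_def LM_def RB_def RA_def by (simp add: sum.distrib sum_subtractf sum_negf)
  moreover have "(\<Sum>i\<in>interfaces (config_of (left_runs ls rs \<union> runs ms ss)). J (i + n))
      = EB + EA + (if rs!0 < 0 \<and> ss!0 > 1 then J n else - J n)"
    unfolding interface_energy_runs[OF assms(2)] EB_def EA_def ..
  moreover have "triangular_weight (q^2) ls = q powr (2 * LL)" "triangular_weight (q^2) ms = q powr (2 * LM)"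
    "left_runs_weight J \<beta> (q^2) n ls rs = q powr (2 * RB) * exp (- \<beta> * EB)"
    "right_runs_weight J \<beta> (q^2) n ms ss = q powr (2 * RA) * exp (- \<beta> * EA)"
    unfolding triangular_weight_def left_runs_weight_def right_runs_weight_def LL_def LM_def RB_def RA_def
      EB_def EA_def
    by (simp_all only: prod_square_powr[OF assms(1)] prod_square_powr_exp_powr[OF assms(1)])
  ultimately show ?thesis
    by (simp add: shifted_weight_def distrib_left powr_add algebra_simps flip: exp_add)
qed

lemma infsum_Times_mult:
  fixes f :: "'a \<Rightarrow> real" and g :: "'b \<Rightarrow> real"
  assumes summable: "(\<lambda>(a, b). f a * g b) summable_on A \<times> B"
  shows "(\<Sum>\<^sub>\<infinity>(a, b)\<in>A \<times> B. f a * g b) = infsum f A * infsum g B"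
proof -
  have inner: "(\<Sum>\<^sub>\<infinity>b\<in>B. f a * g b) = f a * infsum g B" if "a \<in> A" for a
  proof (rule infsum_cmult_right)
    assume "f a \<noteq> 0"
    have "(\<lambda>b. f a * g b) summable_on B"
      using summable_on_SigmaD1[of "\<lambda>a b. f a * g b" A "\<lambda>_. B" a] summable that by simp
    then have "(\<lambda>b. (1 / f a) * (f a * g b)) summable_on B"
      by (rule summable_on_cmult_right)
    then show "g summable_on B"
      using \<open>f a \<noteq> 0\<close> by simp
  qed
  have "(\<Sum>\<^sub>\<infinity>(a, b)\<in>A \<times> B. f a * g b) = (\<Sum>\<^sub>\<infinity>a\<in>A. \<Sum>\<^sub>\<infinity>b\<in>B. f a * g b)"
    using infsum_Sigma_banach[of "\<lambda>(a, b). f a * g b" A "\<lambda>_. B"] summable by simp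
  also have "\<dots> = (\<Sum>\<^sub>\<infinity>a\<in>A. f a * infsum g B)"
    by (rule infsum_cong) (simp add: inner)
  also have "\<dots> = infsum f A * infsum g B"
  proof (rule infsum_cmult_left)
    assume "infsum g B \<noteq> 0"
    then obtain b0 where b0: "b0 \<in> B" "g b0 \<noteq> 0"
      by (metis infsum_0)
    have "(\<lambda>(a, b). f a * g b) summable_on (\<lambda>a. (a, b0)) ` A"
      using b0 by (intro summable_on_subset_banach[OF summable]) auto
    then have "(\<lambda>a. f a * g b0) summable_on A"
      by (subst (asm) summable_on_reindex) (auto simp: inj_on_def o_def)
    then have "(\<lambda>a. (1 / g b0) * (f a * g b0)) summable_on A"
      by (rule summable_on_cmult_right)
    then show "f summable_on A"
      using b0 by simp
  qed
  finally show ?thesis .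
qed

lemma shifted_weight_defects_of_runs_split:
  assumes "q > 0" "((ls, ms), (rs, ss)) \<in> run_data"
  shows "shifted_weight J \<beta> q c n (left_runs ls rs \<union> runs ms ss)
     = triangular_weight (q^2) ls * triangular_weight (q^2) ms *
       (exp (\<beta> * J n) * (left_runs_weight J \<beta> (q^2) n ls rs * right_runs_weight J \<beta> (q^2) n ms ss)
        + (exp (- \<beta> * J n) - exp (\<beta> * J n)) *
          ((if rs!0 < 0 then 1 else 0) * left_runs_weight J \<beta> (q^2) n ls rs *
           ((if ss!0 > 1 then 1 else 0) * right_runs_weight J \<beta> (q^2) n ms ss)))"
  using shifted_weight_defects_of_runs[OF assms, of J \<beta> c n] by (simp add: algebra_simps)

lemma runs_weights_le_shifted_weight:
  assumes "q > 0" "\<beta> \<ge> 0" "((ls, ms), (rs, ss)) \<in> run_data"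
  shows "left_runs_weight J \<beta> (q^2) n ls rs * right_runs_weight J \<beta> (q^2) n ms ss
     \<le> exp (\<beta> * \<bar>J n\<bar>) / (triangular_weight (q^2) ls * triangular_weight (q^2) ms)
       * shifted_weight J \<beta> q c n (left_runs ls rs \<union> runs ms ss)"
proof -
  define \<gamma> where "\<gamma> = (if rs!0 < 0 \<and> ss!0 > 1 then exp (- \<beta> * J n) else exp (\<beta> * J n))"
  define P where "P = triangular_weight (q^2) ls * triangular_weight (q^2) ms"
  define w where "w = left_runs_weight J \<beta> (q^2) n ls rs * right_runs_weight J \<beta> (q^2) n ms ss"
  have "P > 0" "w \<ge> 0"
    using assms(1) by (simp_all add: P_def w_def triangular_weight_pos left_runs_weight_nonneg
        right_runs_weight_nonneg)
  have "0 \<le> \<beta> * (\<bar>J n\<bar> - J n)" "0 \<le> \<beta> * (\<bar>J n\<bar> + J n)"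
    using assms(2) by (auto intro!: mult_nonneg_nonneg)
  then have "1 \<le> exp (\<beta> * \<bar>J n\<bar>) * \<gamma>"
    by (auto simp: \<gamma>_def algebra_simps simp flip: exp_add)
  then have "w \<le> exp (\<beta> * \<bar>J n\<bar>) * \<gamma> * w"
    using \<open>w \<ge> 0\<close> by (simp add: mult_le_cancel_right1)
  also have "\<dots> = exp (\<beta> * \<bar>J n\<bar>) / P * (P * (\<gamma> * w))"
    using \<open>P > 0\<close> by simp
  also have "P * (\<gamma> * w) = shifted_weight J \<beta> q c n (left_runs ls rs \<union> runs ms ss)"
    using shifted_weight_defects_of_runs[OF assms(1,3), of J \<beta> c n] by (simp add: \<gamma>_def P_def w_def mult_ac)
  finally show ?thesis
    by (simp add: w_def P_def)
qed

lemma summable_runs_weights: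
  assumes "q > 0" "\<beta> \<ge> 0" "(ls, ms) \<in> balanced_run_lengths"
    and summable: "(\<lambda>(rs, ss). shifted_weight J \<beta> q c n (left_runs ls rs \<union> runs ms ss)) summable_on adm_r ls \<times> adm_s ms"
  shows "(\<lambda>(rs, ss). left_runs_weight J \<beta> (q^2) n ls rs * right_runs_weight J \<beta> (q^2) n ms ss)
     summable_on adm_r ls \<times> adm_s ms"
proof (rule summable_on_comparison_test)
  define K where "K = exp (\<beta> * \<bar>J n\<bar>) / (triangular_weight (q^2) ls * triangular_weight (q^2) ms)"
  show "(\<lambda>y. K * (case y of (rs, ss) \<Rightarrow> shifted_weight J \<beta> q c n (left_runs ls rs \<union> runs ms ss)))
      summable_on adm_r ls \<times> adm_s ms"
    using summable by (rule summable_on_cmult_right)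
  show "(case y of (rs, ss) \<Rightarrow> left_runs_weight J \<beta> (q^2) n ls rs * right_runs_weight J \<beta> (q^2) n ms ss)
      \<le> K * (case y of (rs, ss) \<Rightarrow> shifted_weight J \<beta> q c n (left_runs ls rs \<union> runs ms ss))"
    if "y \<in> adm_r ls \<times> adm_s ms" for y
  proof (cases y)
    case (Pair rs ss)
    then have "((ls, ms), (rs, ss)) \<in> run_data"
      using that assms(3) by (simp add: run_data_def)
    then show ?thesis
      using runs_weights_le_shifted_weight[OF assms(1,2)] Pair by (simp add: K_def)
  qed
  show "0 \<le> (case y of (rs, ss) \<Rightarrow> left_runs_weight J \<beta> (q^2) n ls rs * right_runs_weight J \<beta> (q^2) n ms ss)"
    for y
    by (auto simp: left_runs_weight_nonneg right_runs_weight_nonneg split: prod.splits)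
qed

lemma infsum_shifted_weight_runs:
  assumes "q > 0" "\<beta> \<ge> 0" "(ls, ms) \<in> balanced_run_lengths"
    and summable: "(\<lambda>(rs, ss). shifted_weight J \<beta> q c n (left_runs ls rs \<union> runs ms ss)) summable_on adm_r ls \<times> adm_s ms"
  shows "(\<Sum>\<^sub>\<infinity>(rs, ss)\<in>adm_r ls \<times> adm_s ms. shifted_weight J \<beta> q c n (left_runs ls rs \<union> runs ms ss))
    = triangular_weight (q^2) ls * triangular_weight (q^2) ms *
      (exp (\<beta> * J n) * A_R J \<beta> (q^2) n ms * B_L J \<beta> (q^2) n ls
       + (exp (- \<beta> * J n) - exp (\<beta> * J n)) * a_R J \<beta> (q^2) n ms * b_L J \<beta> (q^2) n ls)"
proof -
  define Y where "Y = adm_r ls \<times> adm_s ms"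
  define bw where "bw rs = left_runs_weight J \<beta> (q^2) n ls rs" for rs
  define aw where "aw ss = right_runs_weight J \<beta> (q^2) n ms ss" for ss
  define bw' where "bw' rs = (if rs!0 < 0 then 1 else 0) * bw rs" for rs :: "int list"
  define aw' where "aw' ss = (if ss!0 > 1 then 1 else 0) * aw ss" for ss :: "int list"
  have "(\<lambda>(rs, ss). bw rs * aw ss) summable_on Y"
    using summable_runs_weights[OF assms] by (simp add: Y_def bw_def aw_def)
  moreover from this have "(\<lambda>(rs, ss). bw' rs * aw' ss) summable_on Y"
    by (rule summable_on_comparison_test)
      (auto simp: bw'_def aw'_def bw_def aw_def left_runs_weight_nonneg right_runs_weight_nonneg)
  moreover have "(\<Sum>\<^sub>\<infinity>(rs, ss)\<in>Y. shifted_weight J \<beta> q c n (left_runs ls rs \<union> runs ms ss))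
      = (\<Sum>\<^sub>\<infinity>(rs, ss)\<in>Y. triangular_weight (q^2) ls * triangular_weight (q^2) ms *
          (exp (\<beta> * J n) * (bw rs * aw ss) + (exp (- \<beta> * J n) - exp (\<beta> * J n)) * (bw' rs * aw' ss)))"
    using shifted_weight_defects_of_runs_split[OF assms(1)] assms(3)
    by (intro infsum_cong) (auto simp: Y_def run_data_def bw'_def aw'_def bw_def aw_def mult.assoc)
  ultimately have "(\<Sum>\<^sub>\<infinity>(rs, ss)\<in>Y. shifted_weight J \<beta> q c n (left_runs ls rs \<union> runs ms ss))
      = triangular_weight (q^2) ls * triangular_weight (q^2) ms *
        (exp (\<beta> * J n) * infsum bw (adm_r ls) * infsum aw (adm_s ms)
         + (exp (- \<beta> * J n) - exp (\<beta> * J n)) * infsum bw' (adm_r ls) * infsum aw' (adm_s ms))"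
    by (simp add: infsum_cmult_right infsum_add summable_on_cmult_right summable_on_add
        case_prod_unfold infsum_Times_mult[unfolded case_prod_unfold] Y_def mult.assoc)
  then show ?thesis
    by (simp add: Y_def bw'_def[abs_def] aw'_def[abs_def] bw_def[abs_def] aw_def[abs_def] A_R_def B_L_def
        a_R_def b_L_def left_runs_weight_def right_runs_weight_def mult_ac)
qed

lemma summable_weight_configB:
  assumes "0 < q" "q < 1" "\<beta> \<ge> 0" "(\<lambda>i. 1 / (1 + flip_ratio q c \<beta> J i)) summable_on UNIV"
  shows "weight J \<beta> q c summable_on configB"
proof -
  have "(weight J \<beta> q c \<circ> config_of) summable_on {D. finite D}"
    using summable_shifted_weight[OF assms, of 0] by (simp add: o_def weight_config_of)
  then show ?thesis
    unfolding configB_eq_image_config_of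
    by (subst summable_on_reindex) (auto intro: inj_on_subset[OF inj_config_of])
qed

lemma Zpart_pos:
  assumes "0 < q" "q < 1" "\<beta> \<ge> 0" "(\<lambda>i. 1 / (1 + flip_ratio q c \<beta> J i)) summable_on UNIV"
  shows "Zpart J \<beta> q c > 0"
proof -
  have "config_of {} \<in> configB"
    by (rule config_of_in_configB) simp
  have "0 < weight J \<beta> q c (config_of {})"
    using assms(1) by (simp add: weight_def)
  also have "\<dots> = sum (weight J \<beta> q c) {config_of {}}"
    by simp
  also have "\<dots> \<le> Zpart J \<beta> q c"
    unfolding Zpart_def using summable_weight_configB[OF assms] \<open>config_of {} \<in> configB\<close>
    by (intro finite_sum_le_infsum) (auto simp: weight_def)
  finally show ?thesis .
qed

lemma shifted_weight_empty: "q > 0 \<Longrightarrow> shifted_weight J \<beta> q c n {} = exp (- \<beta> * J n)"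
proof -
  have "interfaces (config_of {}) = {0}"
    by (auto simp: interfaces_def config_of_def ground_spin_def)
  moreover assume "q > 0"
  ultimately show ?thesis
    by (simp add: shifted_weight_def f_c_config_of)
qed

lemma infsum_weight_Nfun_zero:
  assumes "0 < q" "q < 1" "\<beta> \<ge> 0" "(\<lambda>i. 1 / (1 + flip_ratio q c \<beta> J i)) summable_on UNIV"
  shows "(\<Sum>\<^sub>\<infinity>\<sigma>\<in>configB. weight J \<beta> q c \<sigma> * ((if Nfun \<sigma> = 0 then 1 else 0) * exp (- \<beta> * H_n J n \<sigma>)))
     = exp (- \<beta> * J n) + (\<Sum>\<^sub>\<infinity>D\<in>balanced_defects. shifted_weight J \<beta> q c n D)"
proof -
  define W where "W \<sigma> = weight J \<beta> q c \<sigma> * ((if Nfun \<sigma> = 0 then 1 else 0) * exp (- \<beta> * H_n J n \<sigma>))" for \<sigma>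
  have Nfun_zero: "Nfun (config_of D) = 0 \<longleftrightarrow> D \<in> insert {} balanced_defects" if "finite D" for D
    using that by (auto simp: Nfun_config_of balanced_defects_def)
  have W: "W (config_of D) = (if Nfun (config_of D) = 0 then shifted_weight J \<beta> q c n D else 0)" for D
    using weight_mult_exp_H_n[of J \<beta> q c D n] by (simp add: W_def)
  have summable: "shifted_weight J \<beta> q c n summable_on balanced_defects"
    by (rule summable_on_subset_banach[OF summable_shifted_weight[OF assms]]) (auto simp: balanced_defects_def)
  have "(\<Sum>\<^sub>\<infinity>\<sigma>\<in>configB. W \<sigma>) = (\<Sum>\<^sub>\<infinity>D\<in>{D. finite D}. W (config_of D))"
    unfolding configB_eq_image_config_of
    by (subst infsum_reindex) (auto simp: o_def intro: inj_on_subset[OF inj_config_of])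
  also have "\<dots> = (\<Sum>\<^sub>\<infinity>D\<in>insert {} balanced_defects. shifted_weight J \<beta> q c n D)"
    by (rule infsum_cong_neutral) (auto simp: W Nfun_zero balanced_defects_def)
  also have "\<dots> = shifted_weight J \<beta> q c n {} + (\<Sum>\<^sub>\<infinity>D\<in>balanced_defects. shifted_weight J \<beta> q c n D)"
    by (rule infsum_insert[OF summable]) (simp add: balanced_defects_def)
  finally show ?thesis
    using shifted_weight_empty[OF assms(1)] by (simp add: W_def)
qed

lemma infsum_balanced_defects:
  assumes "0 < q" "q < 1" "\<beta> \<ge> 0" "(\<lambda>i. 1 / (1 + flip_ratio q c \<beta> J i)) summable_on UNIV"
  shows "(\<Sum>\<^sub>\<infinity>D\<in>balanced_defects. shifted_weight J \<beta> q c n D)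
     = (\<Sum>\<^sub>\<infinity>(ls, ms)\<in>balanced_run_lengths.
          triangular_weight (q^2) ls * triangular_weight (q^2) ms *
          (exp (\<beta> * J n) * A_R J \<beta> (q^2) n ms * B_L J \<beta> (q^2) n ls
           + (exp (- \<beta> * J n) - exp (\<beta> * J n)) * a_R J \<beta> (q^2) n ms * b_L J \<beta> (q^2) n ls))"
proof -
  let ?G = "\<lambda>(ls, ms) (rs, ss). shifted_weight J \<beta> q c n (left_runs ls rs \<union> runs ms ss)"
  have "shifted_weight J \<beta> q c n summable_on balanced_defects"
    by (rule summable_on_subset_banach[OF summable_shifted_weight[OF assms]]) (auto simp: balanced_defects_def)
  then have summable: "(\<lambda>(x, y). ?G x y) summable_on Sigma balanced_run_lengths (\<lambda>(ls, ms). adm_r ls \<times> adm_s ms)"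
    unfolding defects_of_runs_image[symmetric] summable_on_reindex[OF inj_on_defects_of_runs]
    by (simp add: run_data_def o_def defects_of_runs_def case_prod_unfold)
  have "(\<Sum>\<^sub>\<infinity>D\<in>balanced_defects. shifted_weight J \<beta> q c n D)
      = (\<Sum>\<^sub>\<infinity>(x, y)\<in>Sigma balanced_run_lengths (\<lambda>(ls, ms). adm_r ls \<times> adm_s ms). ?G x y)"
    unfolding defects_of_runs_image[symmetric] infsum_reindex[OF inj_on_defects_of_runs]
    by (simp add: run_data_def o_def defects_of_runs_def case_prod_unfold)
  also have "\<dots> = (\<Sum>\<^sub>\<infinity>x\<in>balanced_run_lengths. \<Sum>\<^sub>\<infinity>y\<in>(case x of (ls, ms) \<Rightarrow> adm_r ls \<times> adm_s ms). ?G x y)"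
    using infsum_Sigma_banach[OF summable] by (simp add: case_prod_unfold)
  also have "\<dots> = (\<Sum>\<^sub>\<infinity>(ls, ms)\<in>balanced_run_lengths.
          triangular_weight (q^2) ls * triangular_weight (q^2) ms *
          (exp (\<beta> * J n) * A_R J \<beta> (q^2) n ms * B_L J \<beta> (q^2) n ls
           + (exp (- \<beta> * J n) - exp (\<beta> * J n)) * a_R J \<beta> (q^2) n ms * b_L J \<beta> (q^2) n ls))"
  proof (rule infsum_cong)
    fix x
    assume x: "x \<in> balanced_run_lengths"
    obtain ls ms where x_eq: "x = (ls, ms)"
      by (cases x)
    have "?G x summable_on adm_r ls \<times> adm_s ms"
      using summable_on_SigmaD1[OF summable x] by (simp add: x_eq)
    then show "(\<Sum>\<^sub>\<infinity>y\<in>(case x of (ls, ms) \<Rightarrow> adm_r ls \<times> adm_s ms). ?G x y) = (case x of (ls, ms) \<Rightarrow>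
          triangular_weight (q^2) ls * triangular_weight (q^2) ms *
          (exp (\<beta> * J n) * A_R J \<beta> (q^2) n ms * B_L J \<beta> (q^2) n ls
           + (exp (- \<beta> * J n) - exp (\<beta> * J n)) * a_R J \<beta> (q^2) n ms * b_L J \<beta> (q^2) n ls))"
      using infsum_shifted_weight_runs[OF assms(1,3)] x by (simp add: x_eq)
  qed
  finally show ?thesis .
qed

theorem lemma4p2:
  fixes c \<beta> q Q :: real and J :: "int \<Rightarrow> real" and n :: int
  assumes "\<beta> \<ge> 0" and "0 < q" and "q < 1" and "Q = q^2"
    and "(\<lambda>i::int. 1 / (1 + q powr (2 * (real_of_int i - c)) * exp (\<beta> * J (i - 1))
            / (exp (\<beta> * \<bar>J i\<bar>) + q^2 * exp (\<beta> * \<bar>J (i - 2)\<bar>)))) summable_on {..0}"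
    and "(\<lambda>i::int. 1 / (1 + q powr (- 2 * (real_of_int i - c)) * exp (\<beta> * J (i - 1))
            / (exp (\<beta> * \<bar>J i\<bar>) + q powr (-2) * exp (\<beta> * \<bar>J (i - 2)\<bar>)))) summable_on {1..}"
  shows "Zpart J \<beta> q c * mu_exp J \<beta> q c
            (\<lambda>\<sigma>. (if Nfun \<sigma> = 0 then 1 else 0) * exp (- \<beta> * H_n J n \<sigma>))
       = exp (- \<beta> * J n) +
         (\<Sum>\<^sub>\<infinity>(ls, ms)\<in>{(ls, ms). ls \<noteq> [] \<and> ms \<noteq> [] \<and> (\<forall>x\<in>set ls. x \<ge> 1) \<and>
                 (\<forall>x\<in>set ms. x \<ge> 1) \<and> sum_list ms = sum_list ls}.
            (\<Prod>j<length ls. Q powr (real (ls!j) * (real (ls!j) - 1) / 2)) *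
            (\<Prod>j<length ms. Q powr (real (ms!j) * (real (ms!j) - 1) / 2)) *
            (exp (\<beta> * J n) * A_R J \<beta> Q n ms * B_L J \<beta> Q n ls
             + (exp (- \<beta> * J n) - exp (\<beta> * J n)) * a_R J \<beta> Q n ms * b_L J \<beta> Q n ls))"
proof -
  have hyps: "0 < q" "q < 1" "\<beta> \<ge> 0" "(\<lambda>i. 1 / (1 + flip_ratio q c \<beta> J i)) summable_on UNIV"
    using assms(1-3) summable_inverse_one_plus_flip_ratio[OF assms(2,5,6)] by simp_all
  have "Zpart J \<beta> q c * mu_exp J \<beta> q c (\<lambda>\<sigma>. (if Nfun \<sigma> = 0 then 1 else 0) * exp (- \<beta> * H_n J n \<sigma>))
      = (\<Sum>\<^sub>\<infinity>\<sigma>\<in>configB. weight J \<beta> q c \<sigma> * ((if Nfun \<sigma> = 0 then 1 else 0) * exp (- \<beta> * H_n J n \<sigma>)))"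
    using Zpart_pos[OF hyps] by (simp add: mu_exp_def)
  also have "\<dots> = exp (- \<beta> * J n) + (\<Sum>\<^sub>\<infinity>D\<in>balanced_defects. shifted_weight J \<beta> q c n D)"
    by (rule infsum_weight_Nfun_zero[OF hyps])
  also note infsum_balanced_defects[OF hyps]
  finally show ?thesis
    by (simp add: assms(4) balanced_run_lengths_def triangular_weight_def)
qed

end
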